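(* Let $\beta\in(1,\beta_*]$, where $\beta_*\approx1.4656$ is the real root of $x^3-x^2-1=0$. Then the dynamical systems $(\Omega\times\Upsilon\times S_\beta,\mathcal A\times\mathcal B\times\mathcal S,\nu_\beta,K_\beta)$ and $(\Upsilon,\mathcal B,\mathbb P,\sigma')$ are isomorphic, where $\nu_\beta(A)=\mathbb P(\varphi(Z\cap A))$ for $A\in\mathcal A\times\mathcal B\times\mathcal S$.
   Context: $\vec q_0=(0,0)$, $\vec q_1=(1,0)$, $\vec q_2=(0,1)$; $S_\beta$ is the attractor of the IFS $f_{\vec q_i}(\vec z)=(\vec z+\vec q_i)/\beta$ (here the closed triangle with vertices $(0,0)$, $(\frac1{\beta-1},0)$, $(0,\frac1{\beta-1})$), $\mathcal S$ its Borel $\sigma$-algebra. Subsets of $S_\beta$: $E_0=[0,\frac1\beta)\times[0,\frac1\beta)$; $E_1=\{0\le y<\frac1\beta,\ \frac{1}{\beta(\beta-1)}<x+y\le\frac{1}{\beta-1}\}$; $E_2=\{0\le x<\frac1\beta,\ \frac{1}{\beta(\beta-1)}<x+y\le\frac{1}{\beta-1}\}$; $C_{01}=\{x\ge\frac1\beta,\ 0\le y<\frac1\beta,\ x+y\le\frac{1}{\beta(\beta-1)}\}$; $C_{12}=\{x\ge\frac1\beta,\ y\ge\frac1\beta,\ \frac{1}{\beta(\beta-1)}<x+y\le\frac{1}{\beta-1}\}$; $C_{02}=\{0\le x<\frac1\beta,\ y\ge\frac1\beta,\ x+y\le\frac{1}{\beta(\beta-1)}\}$; $C_{012}=\{x\ge\frac1\beta,\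 y\ge\frac1\beta,\ x+y\le\frac{1}{\beta(\beta-1)}\}$; $C=C_{01}\cup C_{12}\cup C_{02}$. $\Omega=\{0,1\}^{\mathbb N}$, $\Upsilon=\{0,1,2\}^{\mathbb N}$ with product $\sigma$-algebras $\mathcal A,\mathcal B$ and left shifts $\sigma,\sigma'$; $\mathbb P$ is the uniform product measure on $\Upsilon$. $K_\beta$ on $\Omega\times\Upsilon\times S_\beta$: $K_\beta(\omega,\upsilon,\vec z)=(\omega,\upsilon,\beta\vec z-\vec q_i)$ if $\vec z\in E_i$; $(\sigma\omega,\upsilon,\beta\vec z-\vec q_i)$ if $\omega_1=0$, $\vec z\in C_{ij}$ ($ij\in\{01,12,02\}$); $(\sigma\omega,\upsilon,\beta\vec z-\vec q_j)$ if $\omega_1=1$, $\vec z\in C_{ij}$; $(\omega,\sigma'\upsilon,\beta\vec z-\vec q_i)$ if $\vec z\in C_{012}$, $\upsilon_1=i$. The digit $d_1(\omega,\upsilon,\vec z)$ is the vector subtracted, $d_n=d_1\circ K_\beta^{n-1}$. $\varphi:\Omega\times\Upsilon\times S_\beta\to\Upsilon$, $\varphi(\omega,\upsilon,\vec z)=(b_1,b_2,\ldots)$ with $d_n(\omega,\upsilon,\vec z)=\vec q_{b_n}$. $Z$ is the set of points whose $K_\beta$-orbit lies in $\Omega\times\Upsilon\times C$ for infinitely many times and in $\Omega\times\Upsilon\times C_{012}$ for infinitely many times. *)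

theory Defs
  imports "HOL-Probability.Probability"
begin

definition beta_star :: real where
  "beta_star = (THE x::real. x^3 - x^2 - 1 = 0)"

definition qv :: "nat \<Rightarrow> real \<times> real" where
  "qv i = (if i = 1 then (1,0) else if i = 2 then (0,1) else (0,0))"

definition S_beta :: "real \<Rightarrow> (real \<times> real) set" where
  "S_beta \<beta> = {(x,y). 0 \<le> x \<and> 0 \<le> y \<and> x + y \<le> 1/(\<beta>-1)}"

definition E0 :: "real \<Rightarrow> (real \<times> real) set" where
  "E0 \<beta> = S_beta \<beta> \<inter> {(x,y). 0 \<le> x \<and> x < 1/\<beta> \<and> 0 \<le> y \<and> y < 1/\<beta>}"
definition E1 :: "real \<Rightarrow> (real \<times> real) set" where
  "E1 \<beta> = S_beta \<beta> \<inter> {(x,y). 0 \<le> y \<and> y < 1/\<beta> \<and> 1/(\<beta>*(\<beta>-1)) < x + y \<and> x + y \<le> 1/(\<beta>-1)}"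
definition E2 :: "real \<Rightarrow> (real \<times> real) set" where
  "E2 \<beta> = S_beta \<beta> \<inter> {(x,y). 0 \<le> x \<and> x < 1/\<beta> \<and> 1/(\<beta>*(\<beta>-1)) < x + y \<and> x + y \<le> 1/(\<beta>-1)}"
definition C01 :: "real \<Rightarrow> (real \<times> real) set" where
  "C01 \<beta> = S_beta \<beta> \<inter> {(x,y). x \<ge> 1/\<beta> \<and> 0 \<le> y \<and> y < 1/\<beta> \<and> x + y \<le> 1/(\<beta>*(\<beta>-1))}"
definition C12 :: "real \<Rightarrow> (real \<times> real) set" where
  "C12 \<beta> = S_beta \<beta> \<inter> {(x,y). x \<ge> 1/\<beta> \<and> y \<ge> 1/\<beta> \<and> 1/(\<beta>*(\<beta>-1)) < x + y \<and> x + y \<le> 1/(\<beta>-1)}"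
definition C02 :: "real \<Rightarrow> (real \<times> real) set" where
  "C02 \<beta> = S_beta \<beta> \<inter> {(x,y). 0 \<le> x \<and> x < 1/\<beta> \<and> y \<ge> 1/\<beta> \<and> x + y \<le> 1/(\<beta>*(\<beta>-1))}"
definition C012 :: "real \<Rightarrow> (real \<times> real) set" where
  "C012 \<beta> = S_beta \<beta> \<inter> {(x,y). x \<ge> 1/\<beta> \<and> y \<ge> 1/\<beta> \<and> x + y \<le> 1/(\<beta>*(\<beta>-1))}"
definition Cset :: "real \<Rightarrow> (real \<times> real) set" where
  "Cset \<beta> = C01 \<beta> \<union> C12 \<beta> \<union> C02 \<beta>"

text \<open>Left shift on sequences (index 0 plays the role of the paper's index 1).\<close>
definition sshift :: "(nat \<Rightarrow> nat) \<Rightarrow> (nat \<Rightarrow> nat)" where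
  "sshift w = (\<lambda>n. w (Suc n))"

type_synonym point = "(nat \<Rightarrow> nat) \<times> (nat \<Rightarrow> nat) \<times> (real \<times> real)"

text \<open>Index b of the digit d_1 = q_b subtracted by K_beta.\<close>
definition dig :: "real \<Rightarrow> point \<Rightarrow> nat" where
  "dig \<beta> p = (case p of (\<omega>, \<upsilon>, z) \<Rightarrow>
     if z \<in> E0 \<beta> then 0
     else if z \<in> E1 \<beta> then 1
     else if z \<in> E2 \<beta> then 2
     else if z \<in> C01 \<beta> then (if \<omega> 0 = 0 then 0 else 1)
     else if z \<in> C12 \<beta> then (if \<omega> 0 = 0 then 1 else 2)
     else if z \<in> C02 \<beta> then (if \<omega> 0 = 0 then 0 else 2)
     else if z \<in> C012 \<beta> then \<upsilon> 0
     else 0)"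

definition K :: "real \<Rightarrow> point \<Rightarrow> point" where
  "K \<beta> p = (case p of (\<omega>, \<upsilon>, z) \<Rightarrow>
     (if z \<notin> E0 \<beta> \<union> E1 \<beta> \<union> E2 \<beta> \<and> z \<in> Cset \<beta> then sshift \<omega> else \<omega>,
      if z \<notin> E0 \<beta> \<union> E1 \<beta> \<union> E2 \<beta> \<union> Cset \<beta> \<and> z \<in> C012 \<beta> then sshift \<upsilon> else \<upsilon>,
      (\<beta> * fst z - fst (qv (dig \<beta> p)), \<beta> * snd z - snd (qv (dig \<beta> p)))))"

text \<open>phi: the sequence of digit indices b_1 b_2 ... (stored from index 0).\<close>
definition phi :: "real \<Rightarrow> point \<Rightarrow> (nat \<Rightarrow> nat)" where
  "phi \<beta> p = (\<lambda>n. dig \<beta> ((K \<beta> ^^ n) p))"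

definition Omega_M :: "(nat \<Rightarrow> nat) measure" where
  "Omega_M = PiM UNIV (\<lambda>_::nat. count_space {0,1::nat})"

definition P_M :: "(nat \<Rightarrow> nat) measure" where
  "P_M = PiM UNIV (\<lambda>_::nat. uniform_count_measure {0,1,2::nat})"

definition Ups_M :: "(nat \<Rightarrow> nat) measure" where
  "Ups_M = PiM UNIV (\<lambda>_::nat. count_space {0,1,2::nat})"

definition X_M :: "real \<Rightarrow> point measure" where
  "X_M \<beta> = Omega_M \<Otimes>\<^sub>M (Ups_M \<Otimes>\<^sub>M restrict_space borel (S_beta \<beta>))"

definition Z :: "real \<Rightarrow> point set" where
  "Z \<beta> = {p \<in> space (X_M \<beta>).
            infinite {n. snd (snd ((K \<beta> ^^ n) p)) \<in> Cset \<beta>} \<and>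
            infinite {n. snd (snd ((K \<beta> ^^ n) p)) \<in> C012 \<beta>}}"

definition nu_fun :: "real \<Rightarrow> point set \<Rightarrow> ennreal" where
  "nu_fun \<beta> A = emeasure P_M (phi \<beta> ` (Z \<beta> \<inter> A))"

definition nu :: "real \<Rightarrow> point measure" where
  "nu \<beta> = measure_of (space (X_M \<beta>)) (sets (X_M \<beta>)) (nu_fun \<beta>)"

definition mpreserving :: "'a measure \<Rightarrow> ('a \<Rightarrow> 'a) \<Rightarrow> bool" where
  "mpreserving M T \<longleftrightarrow> T \<in> measurable M M \<and>
     (\<forall>A \<in> sets M. emeasure M (T -` A \<inter> space M) = emeasure M A)"

definition mps_isomorphic :: "'a measure \<Rightarrow> ('a \<Rightarrow> 'a) \<Rightarrow> 'b measure \<Rightarrow> ('b \<Rightarrow> 'b) \<Rightarrow> bool" where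
  "mps_isomorphic M T M' T' \<longleftrightarrow> mpreserving M T \<and> mpreserving M' T' \<and>
     (\<exists>N N' \<psi>. N \<in> sets M \<and> N' \<in> sets M' \<and>
        emeasure M (space M - N) = 0 \<and> emeasure M' (space M' - N') = 0 \<and>
        T ` N \<subseteq> N \<and> T' ` N' \<subseteq> N' \<and>
        bij_betw \<psi> N N' \<and>
        \<psi> \<in> measurable (restrict_space M N) (restrict_space M' N') \<and>
        the_inv_into N \<psi> \<in> measurable (restrict_space M' N') (restrict_space M N) \<and>
        (\<forall>x \<in> N. \<psi> (T x) = T' (\<psi> x)) \<and>
        (\<forall>A \<in> sets M'. emeasure M (\<psi> -` A \<inter> N) = emeasure M' A))"

end

theory Submission
  imports Defs
begin

text \<open>The coding map \<open>\<phi>\<close> is inverted explicitly. The position of a point is the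
  \<open>\<beta>\<close>-expansion of its digit sequence, because \<open>K\<^sub>\<beta>\<close> multiplies differences of positions by
  \<open>\<beta>\<close> while \<open>S\<^sub>\<beta>\<close> is bounded; the coins \<open>\<omega>\<close> and \<open>\<upsilon>\<close> are the choices made at the
  successive visits of the orbit to \<open>C\<close> and to \<open>C\<^sub>0\<^sub>1\<^sub>2\<close>. Conversely, since \<open>\<beta> < 3/2\<close> the
  regions are disjoint and every digit is admissible where it is taken, so decoding an arbitrary
  digit sequence in this way yields a point with exactly that digit sequence, and decoding
  conjugates \<open>\<sigma>'\<close> to \<open>K\<^sub>\<beta>\<close>. Almost every digit sequence contains the blocks \<open>10...0\<close>
  and \<open>1202 0...0\<close> infinitely often; with enough zeros they force visits to \<open>C\<close> and, because
  \<open>\<beta>\<^sup>3 \<le> \<beta>\<^sup>2 + 1\<close>, to \<open>C\<^sub>0\<^sub>1\<^sub>2\<close>. Hence almost every decoded point lies in \<open>Z\<close>, \<open>\<nu>\<^sub>\<beta>\<close> is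
  the image of the uniform measure under decoding, and \<open>\<phi>\<close> restricted to \<open>Z\<close> is the
  isomorphism.\<close>

lemma cubic_strict_mono:
  fixes x y :: real
  assumes "1 \<le> x" "x < y"
  shows "x^3 - x^2 < y^3 - y^2"
proof -
  have "y^3 - y^2 - (x^3 - x^2) = (y - x) * (y*(y-1) + x*(x-1) + x*y)"
    by (simp add: algebra_simps power2_eq_square power3_eq_cube)
  moreover have "0 < y*(y-1) + x*(x-1) + x*y"
    using assms by (intro add_nonneg_pos add_nonneg_nonneg) auto
  ultimately show ?thesis
    using mult_pos_pos[of "y - x"] assms by (smt (verit))
qed

lemma cubic_mono:
  fixes x y :: real
  assumes "1 \<le> x" "x \<le> y"
  shows "x^3 - x^2 \<le> y^3 - y^2"
proof (cases "x = y")
  case False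
  then show ?thesis using cubic_strict_mono[OF assms(1), of y] assms(2) by simp
qed simp

lemma cubic_root_gt_1:
  fixes x :: real
  assumes "x^3 - x^2 - 1 = 0"
  shows "1 < x"
proof (rule ccontr)
  assume "\<not> 1 < x"
  then have "x^2 * (x - 1) \<le> 0" by (simp add: mult_nonneg_nonpos)
  moreover have "x^3 - x^2 = x^2 * (x - 1)" by (simp add: algebra_simps power2_eq_square power3_eq_cube)
  ultimately show False using assms by simp
qed

lemma cubic_root_unique:
  fixes x y :: real
  assumes "x^3 - x^2 - 1 = 0" "y^3 - y^2 - 1 = 0"
  shows "x = y"
  using cubic_strict_mono[of x y] cubic_strict_mono[of y x]
    cubic_root_gt_1[OF assms(1)] cubic_root_gt_1[OF assms(2)] assms
  by (cases x y rule: linorder_cases) auto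

lemma beta_star_root: "beta_star^3 - beta_star^2 - 1 = 0"
proof -
  have "\<exists>x::real. 1 \<le> x \<and> x \<le> 2 \<and> x^3 - x^2 - 1 = 0"
    by (rule IVT) (auto intro!: continuous_intros)
  then obtain x :: real where x: "x^3 - x^2 - 1 = 0" by blast
  show ?thesis
    unfolding beta_star_def by (rule theI[where P = "\<lambda>x. x^3 - x^2 - 1 = 0", OF x])
      (erule cubic_root_unique[OF _ x])
qed

lemma beta_star_less: "beta_star < 3/2"
proof (rule ccontr)
  assume "\<not> beta_star < 3/2"
  then have "(3/2::real)^3 - (3/2)^2 \<le> beta_star^3 - beta_star^2"
    by (intro cubic_mono) auto
  then show False using beta_star_root by (simp add: power3_eq_cube power2_eq_square)
qed

locale beta_expansion =
  fixes \<beta> :: real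
  assumes beta_gt_1: "1 < \<beta>"

locale small_beta = beta_expansion +
  assumes beta_le_star: "\<beta> \<le> beta_star"
begin

lemma beta_less: "\<beta> < 3/2"
  using beta_le_star beta_star_less by simp

lemma beta_cube_le: "\<beta>^3 \<le> \<beta>^2 + 1"
proof -
  have "\<beta>^3 - \<beta>^2 \<le> beta_star^3 - beta_star^2"
    using beta_le_star beta_gt_1 by (intro cubic_mono) auto
  then show ?thesis using beta_star_root by simp
qed

end

lemma sshift_apply: "sshift b i = b (Suc i)"
  by (simp add: sshift_def)

lemma funpow_sshift_apply: "(sshift ^^ n) b i = b (i + n)"
  by (induction n arbitrary: i) (auto simp: sshift_def)

lemma funpow_sshift_Suc: "(sshift ^^ n) (sshift b) = (sshift ^^ Suc n) b"
  by (simp add: funpow_Suc_right del: funpow.simps)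

definition card_below :: "nat set \<Rightarrow> nat \<Rightarrow> nat" where
  "card_below V n = card ({..<n} \<inter> V)"

text \<open>Unlike
  \<^const>\<open>enumerate\<close>, which is junk for finite \<open>V\<close>, this is measurable whenever \<open>V\<close> and \<open>P\<close>
  depend measurably on a parameter.\<close>
definition holds_at_rank :: "nat set \<Rightarrow> (nat \<Rightarrow> bool) \<Rightarrow> nat \<Rightarrow> bool" where
  "holds_at_rank V P k \<longleftrightarrow> (\<exists>n\<in>V. card_below V n = k \<and> P n)"

lemma card_below_0 [simp]: "card_below V 0 = 0"
  by (simp add: card_below_def)

lemma card_below_Suc: "card_below V (Suc n) = card_below V n + (if n \<in> V then 1 else 0)"
  by (simp add: card_below_def lessThan_Suc)

lemma card_below_shift:
  "card_below V (Suc n) = card_below {m. Suc m \<in> V} n + (if 0 \<in> V then 1 else 0)"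
  by (induction n) (simp_all add: card_below_Suc)

lemma inj_on_card_below: "inj_on (card_below V) V"
proof -
  have "card_below V m < card_below V n" if "m \<in> V" "m < n" for m n
    unfolding card_below_def using that by (intro psubset_card_mono) auto
  then show ?thesis
    by (intro inj_onI) (metis linorder_neqE_nat less_irrefl)
qed

lemma card_below_enumerate:
  assumes "infinite V"
  shows "card_below V (enumerate V k) = k"
proof -
  have "{..<enumerate V k} \<inter> V = enumerate V ` {..<k}"
  proof (intro equalityI subsetI)
    fix x assume "x \<in> {..<enumerate V k} \<inter> V"
    moreover obtain n where "enumerate V n = x"
      using enumerate_Ex[OF assms] calculation by blast
    ultimately show "x \<in> enumerate V ` {..<k}" using assms by auto
  qed (use assms enumerate_in_set in auto)
  then show ?thesis
    using inj_enumerate[OF assms] by (simp add: card_below_def card_image inj_on_subset)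
qed

lemma holds_at_rank_iff:
  assumes "n \<in> V" "card_below V n = k"
  shows "holds_at_rank V P k \<longleftrightarrow> P n"
  using assms inj_on_card_below[of V] by (auto simp: holds_at_rank_def inj_on_def)

lemma holds_at_rank_enumerate:
  assumes "infinite V"
  shows "holds_at_rank V P k \<longleftrightarrow> P (enumerate V k)"
  using assms by (intro holds_at_rank_iff enumerate_in_set card_below_enumerate)

lemma holds_at_rank_shift:
  "holds_at_rank {m. Suc m \<in> V} (\<lambda>n. P (Suc n)) k
     \<longleftrightarrow> holds_at_rank V P (k + (if 0 \<in> V then 1 else 0))"
proof
  assume "holds_at_rank {m. Suc m \<in> V} (\<lambda>n. P (Suc n)) k"
  then show "holds_at_rank V P (k + (if 0 \<in> V then 1 else 0))"
    unfolding holds_at_rank_def by (metis card_below_shift mem_Collect_eq)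
next
  assume "holds_at_rank V P (k + (if 0 \<in> V then 1 else 0))"
  then obtain n where n: "n \<in> V" "card_below V n = k + (if 0 \<in> V then 1 else 0)" "P n"
    by (auto simp: holds_at_rank_def)
  then show "holds_at_rank {m. Suc m \<in> V} (\<lambda>n. P (Suc n)) k"
    unfolding holds_at_rank_def using card_below_shift[of V] by (cases n) auto
qed

lemma pred_card_below_eq:
  assumes "\<And>m. Measurable.pred M (Q m)"
  shows "Measurable.pred M (\<lambda>x. card_below {m. Q m x} n = k)"
proof (induction n arbitrary: k)
  case (Suc n)
  have "card_below {m. Q m x} (Suc n) = k \<longleftrightarrow>
      (Q n x \<and> 0 < k \<and> card_below {m. Q m x} n = k - 1) \<or> (\<not> Q n x \<and> card_below {m. Q m x} n = k)" for x
    by (auto simp: card_below_Suc)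
  then show ?case using Suc assms by simp measurable
qed simp

lemma pred_holds_at_rank:
  assumes "\<And>m. Measurable.pred M (Q m)" "\<And>m. Measurable.pred M (R m)"
  shows "Measurable.pred M (\<lambda>x. holds_at_rank {m. Q m x} (\<lambda>n. R n x) k)"
  unfolding holds_at_rank_def using assms pred_card_below_eq[OF assms(1)] by simp measurable

section \<open>Bernoulli shifts\<close>

lemma measurable_sshift [measurable]:
  "sshift \<in> measurable (\<Pi>\<^sub>M i\<in>UNIV::nat set. N) (\<Pi>\<^sub>M i\<in>UNIV. N)"
proof -
  have "(\<lambda>b i. b (Suc i)) \<in> measurable (\<Pi>\<^sub>M i\<in>UNIV::nat set. N) (\<Pi>\<^sub>M i\<in>UNIV. N)"
    by (rule measurable_PiM_single') (auto simp: space_PiM PiE_UNIV_domain)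
  then show ?thesis by (simp add: sshift_def[abs_def])
qed

lemma measurable_funpow_sshift:
  "(sshift ^^ n) \<in> measurable (\<Pi>\<^sub>M i\<in>UNIV::nat set. N) (\<Pi>\<^sub>M i\<in>UNIV. N)"
  by (induction n) (auto intro: measurable_compose[OF _ measurable_sshift])

definition occurs :: "'a list \<Rightarrow> (nat \<Rightarrow> 'a) \<Rightarrow> nat \<Rightarrow> bool" where
  "occurs w b n \<longleftrightarrow> (\<forall>i<length w. b (n + i) = w ! i)"

lemma occurs_Nil [simp]: "occurs [] b n"
  by (simp add: occurs_def)

lemma occurs_Cons: "occurs (c # w) b n \<longleftrightarrow> b n = c \<and> occurs w b (Suc n)"
  by (auto simp: occurs_def less_Suc_eq_0_disj)

lemma occurs_sshift: "occurs w (sshift b) n \<longleftrightarrow> occurs w b (Suc n)"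
  by (simp add: occurs_def sshift_apply)

lemma occurs_funpow_sshift: "occurs w ((sshift ^^ m) b) n \<longleftrightarrow> occurs w b (n + m)"
  by (simp add: occurs_def funpow_sshift_apply ac_simps)

locale nat_sequence_space = sequence_space M for M :: "nat measure"
begin

lemma emeasure_sshift_cons:
  assumes C: "C \<in> sets M" and F: "F \<in> sets S"
  shows "emeasure S {b \<in> space S. b 0 \<in> C \<and> sshift b \<in> F} = emeasure M C * emeasure S F"
proof -
  let ?cons = "\<lambda>(s, b). case_nat s b"
  have cons: "?cons \<in> measurable (M \<Otimes>\<^sub>M S) S"
    by measurable
  have "{b \<in> space S. b 0 \<in> C \<and> sshift b \<in> F}
      = ((\<lambda>b. b 0) -` C \<inter> space S) \<inter> (sshift -` F \<inter> space S)"
    by auto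
  also have "\<dots> \<in> sets S"
    using measurable_sets[OF measurable_component_singleton[of 0 UNIV] C]
      measurable_sets[OF measurable_sshift F]
    by auto
  finally have A: "{b \<in> space S. b 0 \<in> C \<and> sshift b \<in> F} \<in> sets S" .
  have "?cons -` {b \<in> space S. b 0 \<in> C \<and> sshift b \<in> F} \<inter> space (M \<Otimes>\<^sub>M S) = C \<times> F"
    using measurable_space[OF cons] sets.sets_into_space[OF C] sets.sets_into_space[OF F]
    by (auto simp: space_pair_measure sshift_def)
  then show ?thesis
    using emeasure_distr[OF cons A] PiM_iter P.emeasure_pair_measure_Times[OF C F] by simp
qed

lemma emeasure_sshift_vimage:
  assumes "F \<in> sets S"
  shows "emeasure S (sshift -` F \<inter> space S) = emeasure S F"
proof -
  have "sshift -` F \<inter> space S = {b \<in> space S. b 0 \<in> space M \<and> sshift b \<in> F}"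
    by (auto simp: space_PiM)
  then show ?thesis
    using emeasure_sshift_cons[OF sets.top assms] by (simp add: M.emeasure_space_1)
qed

lemma emeasure_funpow_sshift_vimage:
  assumes F: "F \<in> sets S"
  shows "emeasure S ((sshift ^^ n) -` F \<inter> space S) = emeasure S F"
proof (induction n)
  case 0
  then show ?case using sets.sets_into_space[OF F] by (simp add: Int_absorb2)
next
  case (Suc n)
  have "(sshift ^^ Suc n) -` F \<inter> space S = sshift -` ((sshift ^^ n) -` F \<inter> space S) \<inter> space S"
    using measurable_space[OF measurable_sshift] by (auto simp del: funpow.simps simp: funpow_Suc_right)
  then show ?case
    by (simp only: emeasure_sshift_vimage[OF measurable_sets[OF measurable_funpow_sshift F]] Suc.IH)
qed

lemma sets_occurs:
  assumes "\<forall>c\<in>set w. {c} \<in> sets M"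
  shows "{b \<in> space S. occurs w b n} \<in> sets S"
  using assms
proof (induction w arbitrary: n)
  case (Cons c w)
  have "{b \<in> space S. occurs (c # w) b n}
      = ((\<lambda>b. b n) -` {c} \<inter> space S) \<inter> {b \<in> space S. occurs w b (Suc n)}"
    by (auto simp: occurs_Cons)
  moreover have "(\<lambda>b. b n) -` {c} \<inter> space S \<in> sets S"
    by (rule measurable_sets[OF measurable_component_singleton]) (use Cons.prems in auto)
  ultimately show ?case using Cons by auto
qed simp

lemma measure_occurs_prefix:
  assumes w: "\<forall>c\<in>set w. {c} \<in> sets M" and F: "F \<in> sets S"
  shows "measure S {b \<in> space S. occurs w b 0 \<and> (sshift ^^ length w) b \<in> F}
           = (\<Prod>c\<leftarrow>w. measure M {c}) * measure S F"
  using w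
proof (induction w)
  case Nil
  then show ?case using sets.sets_into_space[OF F] by (simp add: Int_absorb1 Collect_conj_eq)
next
  case (Cons c w)
  define F' where "F' = {b \<in> space S. occurs w b 0 \<and> (sshift ^^ length w) b \<in> F}"
  have "F' = {b \<in> space S. occurs w b 0} \<inter> ((sshift ^^ length w) -` F \<inter> space S)"
    by (auto simp: F'_def)
  then have F': "F' \<in> sets S"
    using sets_occurs Cons.prems measurable_sets[OF measurable_funpow_sshift F] by auto
  have "{b \<in> space S. occurs (c # w) b 0 \<and> (sshift ^^ length (c # w)) b \<in> F}
      = {b \<in> space S. b 0 \<in> {c} \<and> sshift b \<in> F'}"
    using measurable_space[OF measurable_sshift]
    by (auto simp: F'_def occurs_Cons occurs_sshift funpow_Suc_right simp del: funpow.simps)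
  also have "emeasure S \<dots> = emeasure M {c} * emeasure S F'"
    using emeasure_sshift_cons[OF _ F', of "{c}"] Cons.prems by simp
  finally have "measure S {b \<in> space S. occurs (c # w) b 0 \<and> (sshift ^^ length (c # w)) b \<in> F}
      = measure M {c} * measure S F'"
    by (simp add: measure_def enn2real_mult)
  then show ?case using Cons by (simp add: F'_def)
qed

text \<open>Splitting off the first block, the set of sequences in which \<open>w\<close> never occurs at a
  multiple of \<open>length w\<close> is the disjoint difference of its preimage under
  \<open>sshift ^^ length w\<close> and a set of \<open>p\<close> times its measure, \<open>p > 0\<close>; shift invariance
  forces the measure to vanish.\<close>
lemma null_sets_never_occurs_at_multiples:
  assumes w: "\<forall>c\<in>set w. {c} \<in> sets M \<and> 0 < measure M {c}"
  shows "{b \<in> space S. \<forall>j. \<not> occurs w b (j * length w)} \<in> null_sets S"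
proof -
  define L where "L = length w"
  define E where "E = {b \<in> space S. \<forall>j. \<not> occurs w b (j * L)}"
  have w_sets: "\<forall>c\<in>set w. {c} \<in> sets M" using w by blast
  have "E = space S - (\<Union>j. {b \<in> space S. occurs w b (j * L)})"
    by (auto simp: E_def)
  then have E: "E \<in> sets S" using sets_occurs[OF w_sets] by auto
  define A where "A = {b \<in> space S. occurs w b 0 \<and> (sshift ^^ L) b \<in> E}"
  have "A = {b \<in> space S. occurs w b 0} \<inter> ((sshift ^^ L) -` E \<inter> space S)"
    by (auto simp: A_def)
  then have A: "A \<in> sets S"
    using sets_occurs[OF w_sets] measurable_sets[OF measurable_funpow_sshift E] by auto
  have all_nat_split: "(\<forall>j. P j) \<longleftrightarrow> P 0 \<and> (\<forall>j. P (Suc j))" for P :: "nat \<Rightarrow> bool"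
    by (metis not0_implies_Suc)
  have E_iff: "b \<in> E \<longleftrightarrow> b \<in> space S \<and> \<not> occurs w b 0 \<and> (\<forall>j. \<not> occurs w b (j * L + L))" for b
    unfolding E_def using all_nat_split[of "\<lambda>j. \<not> occurs w b (j * L)"] by (auto simp: add.commute)
  have shifted_E_iff: "(sshift ^^ L) b \<in> E \<longleftrightarrow> (\<forall>j. \<not> occurs w b (j * L + L))"
    if "b \<in> space S" for b
    using that measurable_space[OF measurable_funpow_sshift] by (auto simp: E_def occurs_funpow_sshift)
  have shift_E: "(sshift ^^ L) -` E \<inter> space S = E \<union> A" and disj: "E \<inter> A = {}"
    using E_iff shifted_E_iff by (auto simp: A_def)
  have "measure S E = measure S ((sshift ^^ L) -` E \<inter> space S)"
    using emeasure_funpow_sshift_vimage[OF E, of L] by (simp add: measure_def)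
  also have "\<dots> = measure S E + (\<Prod>c\<leftarrow>w. measure M {c}) * measure S E"
    unfolding shift_E using measure_occurs_prefix[OF w_sets E] P.finite_measure_Union[OF E A disj]
    by (simp add: A_def L_def)
  finally have "(\<Prod>c\<leftarrow>w. measure M {c}) * measure S E = 0" by simp
  moreover have "0 < (\<Prod>c\<leftarrow>w. measure M {c})"
    using w by (induction w) auto
  ultimately have "emeasure S E = 0"
    by (simp add: P.emeasure_eq_measure)
  then show ?thesis
    using E by (auto simp: E_def L_def intro: null_setsI)
qed

lemma AE_infinitely_many_occurs:
  assumes w: "\<forall>c\<in>set w. {c} \<in> sets M \<and> 0 < measure M {c}"
  shows "AE b in S. infinite {n. occurs w b n}"
proof -
  define E where "E = {b \<in> space S. \<forall>j. \<not> occurs w b (j * length w)}"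
  have E: "E \<in> null_sets S"
    unfolding E_def by (rule null_sets_never_occurs_at_multiples[OF w])
  then have null: "(sshift ^^ m) -` E \<inter> space S \<in> null_sets S" for m
    using emeasure_funpow_sshift_vimage[of E m] measurable_sets[OF measurable_funpow_sshift, of E]
    by (auto simp: null_sets_def)
  have "{b \<in> space S. \<not> infinite {n. occurs w b n}} \<subseteq> (\<Union>m. (sshift ^^ m) -` E \<inter> space S)"
  proof
    fix b assume "b \<in> {b \<in> space S. \<not> infinite {n. occurs w b n}}"
    then obtain m where b: "b \<in> space S" "\<And>n. occurs w b n \<Longrightarrow> n < m"
      by (auto simp: finite_nat_set_iff_bounded)
    have "\<not> occurs w b (j * length w + m)" for j
      using b(2)[of "j * length w + m"] by auto
    then have "(sshift ^^ m) b \<in> E"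
      using measurable_space[OF measurable_funpow_sshift] b(1)
      by (auto simp: E_def occurs_funpow_sshift)
    then show "b \<in> (\<Union>m. (sshift ^^ m) -` E \<inter> space S)" using b by auto
  qed
  then show ?thesis
    by (rule AE_I'[OF null_sets_UN[OF null]])
qed

end

lemma space_P_M: "space P_M = {b. \<forall>n. b n \<in> {0, 1, 2}}"
  unfolding P_M_def
  by (simp add: space_PiM PiE_UNIV_domain space_uniform_count_measure Pi_iff set_eq_iff)

lemma space_X_M:
  "space (X_M \<beta>) =
     {p. (\<forall>i. fst p i \<in> {0, 1}) \<and> (\<forall>i. fst (snd p) i \<in> {0, 1, 2}) \<and> snd (snd p) \<in> S_beta \<beta>}"
  unfolding X_M_def Omega_M_def Ups_M_def
  by (simp add: space_pair_measure space_PiM space_restrict_space PiE_UNIV_domain Pi_iff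
      mem_Times_iff set_eq_iff)

lemma sshift_in_space_P_M: "b \<in> space P_M \<Longrightarrow> sshift b \<in> space P_M"
  by (simp add: space_P_M sshift_apply)

lemma funpow_sshift_in_space_P_M: "b \<in> space P_M \<Longrightarrow> (sshift ^^ n) b \<in> space P_M"
  by (simp add: space_P_M funpow_sshift_apply)

lemma position_K:
  "snd (snd (K \<beta> p)) =
     (\<beta> * fst (snd (snd p)) - fst (qv (dig \<beta> p)), \<beta> * snd (snd (snd p)) - snd (qv (dig \<beta> p)))"
  by (cases p) (simp add: K_def)

lemma phi_K: "phi \<beta> (K \<beta> p) = sshift (phi \<beta> p)"
  by (simp add: phi_def sshift_def funpow_Suc_right del: funpow.simps)

lemma phi_funpow_K: "phi \<beta> ((K \<beta> ^^ n) p) = (sshift ^^ n) (phi \<beta> p)"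
  by (induction n) (simp_all add: phi_K)

lemma dig_in_digits:
  assumes "p \<in> space (X_M \<beta>)"
  shows "dig \<beta> p \<in> {0, 1, 2}"
  using assms by (cases p) (auto simp: dig_def space_X_M)

interpretation digits: nat_sequence_space "uniform_count_measure {0, 1, 2 :: nat}"
proof -
  interpret prob_space "uniform_count_measure {0, 1, 2 :: nat}"
    by (rule prob_space_uniform_count_measure) auto
  show "nat_sequence_space (uniform_count_measure {0, 1, 2 :: nat})"
    by unfold_locales
qed

lemma P_M_eq: "P_M = (\<Pi>\<^sub>M i\<in>UNIV. uniform_count_measure {0, 1, 2 :: nat})"
  by (simp add: P_M_def)

lemma emeasure_sshift_vimage_P_M:
  "A \<in> sets P_M \<Longrightarrow> emeasure P_M (sshift -` A \<inter> space P_M) = emeasure P_M A"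
  unfolding P_M_eq by (rule digits.emeasure_sshift_vimage)

lemma mpreserving_sshift: "mpreserving P_M sshift"
  unfolding mpreserving_def using emeasure_sshift_vimage_P_M measurable_sshift[of "uniform_count_measure {0, 1, 2}"]
  by (simp add: P_M_eq)

lemma measurable_digit_comp:
  assumes "f \<in> {0, 1, 2} \<rightarrow> space N"
  shows "(\<lambda>b. f (b i)) \<in> measurable P_M N"
proof -
  have "f \<in> measurable (uniform_count_measure {0, 1, 2}) N"
    using assms by (simp add: measurable_cong_sets[OF sets_uniform_count_measure_count_space refl])
  with measurable_component_singleton[where I = UNIV and i = i
      and M = "\<lambda>_. uniform_count_measure {0, 1, 2}", OF UNIV_I]
  show ?thesis unfolding P_M_eq by (rule measurable_compose)
qed

lemma pred_digit: "Measurable.pred P_M (\<lambda>b. b i = c)"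
  using measurable_digit_comp[of "\<lambda>d. d = c" "count_space UNIV" i] by simp

lemma measurable_funpow_sshift_P_M: "(sshift ^^ n) \<in> measurable P_M P_M"
  unfolding P_M_eq by (rule measurable_funpow_sshift)

lemmas region_defs = S_beta_def E0_def E1_def E2_def C01_def C12_def C02_def C012_def Cset_def

lemma borel_measurable_fst_real_pair [measurable]: "(fst :: real \<times> real \<Rightarrow> real) \<in> borel_measurable borel"
  and borel_measurable_snd_real_pair [measurable]: "(snd :: real \<times> real \<Rightarrow> real) \<in> borel_measurable borel"
  by (intro borel_measurable_continuous_onI continuous_intros)+

lemma sets_borel_Collect_case_prod:
  "Measurable.pred borel (\<lambda>z. P (fst z) (snd z)) \<Longrightarrow> {(x, y). P x y} \<in> sets borel"
  by (simp add: pred_def case_prod_unfold)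

lemma sets_borel_S_beta [measurable]: "S_beta \<beta> \<in> sets borel"
  unfolding S_beta_def by (rule sets_borel_Collect_case_prod) measurable

lemma sets_borel_regions [measurable]:
  "E0 \<beta> \<in> sets borel" "E1 \<beta> \<in> sets borel" "E2 \<beta> \<in> sets borel"
  "C01 \<beta> \<in> sets borel" "C12 \<beta> \<in> sets borel" "C02 \<beta> \<in> sets borel" "C012 \<beta> \<in> sets borel"
  "Cset \<beta> \<in> sets borel"
proof -
  have region: "S_beta \<beta> \<inter> {(x, y). P x y} \<in> sets borel"
    if "Measurable.pred borel (\<lambda>z. P (fst z) (snd z))" for P
    using sets_borel_Collect_case_prod[OF that] by simp
  show "E0 \<beta> \<in> sets borel" unfolding E0_def by (rule region) measurable
  show "E1 \<beta> \<in> sets borel" unfolding E1_def by (rule region) measurable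
  show "E2 \<beta> \<in> sets borel" unfolding E2_def by (rule region) measurable
  show C01: "C01 \<beta> \<in> sets borel" unfolding C01_def by (rule region) measurable
  show C12: "C12 \<beta> \<in> sets borel" unfolding C12_def by (rule region) measurable
  show C02: "C02 \<beta> \<in> sets borel" unfolding C02_def by (rule region) measurable
  show "C012 \<beta> \<in> sets borel" unfolding C012_def by (rule region) measurable
  show "Cset \<beta> \<in> sets borel" unfolding Cset_def using C01 C12 C02 by simp
qed

lemma measurable_fst_X_M: "fst \<in> measurable (X_M \<beta>) Omega_M"
  and measurable_fst_snd_X_M: "(\<lambda>p. fst (snd p)) \<in> measurable (X_M \<beta>) Ups_M"
  and measurable_position: "(\<lambda>p. snd (snd p)) \<in> measurable (X_M \<beta>) (restrict_space borel (S_beta \<beta>))"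
  unfolding X_M_def by measurable

lemma borel_measurable_position: "(\<lambda>p. snd (snd p)) \<in> borel_measurable (X_M \<beta>)"
  using measurable_compose[OF measurable_position measurable_restrict_space1[OF measurable_ident]]
  by simp

lemma pred_position: "R \<in> sets borel \<Longrightarrow> Measurable.pred (X_M \<beta>) (\<lambda>p. snd (snd p) \<in> R)"
  by (rule pred_sets2[OF _ borel_measurable_position])

lemma measurable_first_coins:
  "(\<lambda>p. fst p 0) \<in> measurable (X_M \<beta>) (count_space UNIV)"
  "(\<lambda>p. fst (snd p) 0) \<in> measurable (X_M \<beta>) (count_space UNIV)"
proof -
  have "(\<lambda>p. fst p 0) \<in> measurable (X_M \<beta>) (count_space {0, 1})"
    "(\<lambda>p. fst (snd p) 0) \<in> measurable (X_M \<beta>) (count_space {0, 1, 2})"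
    using measurable_compose[OF measurable_fst_X_M, of "\<lambda>w. w 0"]
      measurable_compose[OF measurable_fst_snd_X_M, of "\<lambda>w. w 0"]
    unfolding Omega_M_def Ups_M_def by (simp_all add: measurable_component_singleton)
  then show "(\<lambda>p. fst p 0) \<in> measurable (X_M \<beta>) (count_space UNIV)"
    "(\<lambda>p. fst (snd p) 0) \<in> measurable (X_M \<beta>) (count_space UNIV)"
    by (auto intro: measurable_compose[OF _ measurable_count_space_extend[OF subset_UNIV]])
qed

lemma measurable_dig: "dig \<beta> \<in> measurable (X_M \<beta>) (count_space UNIV)"
proof -
  have "dig \<beta> = (\<lambda>p. if snd (snd p) \<in> E0 \<beta> then 0
     else if snd (snd p) \<in> E1 \<beta> then 1
     else if snd (snd p) \<in> E2 \<beta> then 2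
     else if snd (snd p) \<in> C01 \<beta> then (if fst p 0 = 0 then 0 else 1)
     else if snd (snd p) \<in> C12 \<beta> then (if fst p 0 = 0 then 1 else 2)
     else if snd (snd p) \<in> C02 \<beta> then (if fst p 0 = 0 then 0 else 2)
     else if snd (snd p) \<in> C012 \<beta> then fst (snd p) 0
     else 0)"
    by (auto simp: fun_eq_iff dig_def)
  also have "\<dots> \<in> measurable (X_M \<beta>) (count_space UNIV)"
    by (intro measurable_If measurable_const measurable_first_coins(2) predE[OF pred_position]
        predE[OF pred_eq_const1[OF measurable_first_coins(1)]] sets_borel_regions) auto
  finally show ?thesis .
qed

section \<open>Digit expansions\<close>

lemma qv_simps: "fst (qv d) = of_bool (d = 1)" "snd (qv d) = of_bool (d = 2)"
  by (auto simp: qv_def)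

context beta_expansion
begin

definition beta_sum :: "(nat \<Rightarrow> real) \<Rightarrow> real" where
  "beta_sum f = (\<Sum>n. f n / \<beta> ^ Suc n)"

definition expansion :: "(nat \<Rightarrow> nat) \<Rightarrow> real \<times> real" where
  "expansion b = (beta_sum (\<lambda>n. fst (qv (b n))), beta_sum (\<lambda>n. snd (qv (b n))))"

lemma sums_inverse_powers: "(\<lambda>n. 1 / \<beta> ^ Suc n) sums (1 / (\<beta> - 1))"
proof -
  have "(\<lambda>n. 1 / \<beta> * (1 / \<beta>) ^ n) sums (1 / \<beta> * (1 / (1 - 1 / \<beta>)))"
    using beta_gt_1 by (intro sums_mult geometric_sums) simp
  moreover have "1 / \<beta> * (1 / (1 - 1 / \<beta>)) = 1 / (\<beta> - 1)"
    using beta_gt_1 by (simp add: field_simps)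
  ultimately show ?thesis by (simp add: power_one_over)
qed

lemma summable_beta_sum:
  assumes "\<And>n. \<bar>f n\<bar> \<le> 1"
  shows "summable (\<lambda>n. f n / \<beta> ^ Suc n)"
  by (rule summable_comparison_test[OF _ sums_summable[OF sums_inverse_powers]])
     (use assms beta_gt_1 in \<open>auto simp: abs_divide divide_right_mono\<close>)

lemma beta_sum_bounds:
  assumes "\<And>n. 0 \<le> f n" "\<And>n. f n \<le> 1"
  shows "0 \<le> beta_sum f" "beta_sum f \<le> 1 / (\<beta> - 1)"
proof -
  have "\<bar>f n\<bar> \<le> 1" for n using assms by (simp add: abs_le_iff)
  note summable = summable_beta_sum[OF this]
  show "0 \<le> beta_sum f"
    unfolding beta_sum_def using assms beta_gt_1 by (intro suminf_nonneg summable) auto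
  show "beta_sum f \<le> 1 / (\<beta> - 1)"
    unfolding beta_sum_def sums_unique[OF sums_inverse_powers] using assms beta_gt_1
    by (intro suminf_le summable sums_summable[OF sums_inverse_powers] divide_right_mono) auto
qed

lemma beta_sum_Suc:
  assumes "\<And>n. \<bar>f n\<bar> \<le> 1"
  shows "beta_sum f = (f 0 + beta_sum (\<lambda>n. f (Suc n))) / \<beta>"
proof -
  have "beta_sum (\<lambda>n. f (Suc n)) / \<beta> = (\<Sum>n. f (Suc n) / \<beta> ^ Suc n / \<beta>)"
    unfolding beta_sum_def by (rule suminf_divide[symmetric], rule summable_beta_sum) (rule assms)
  also have "\<dots> = beta_sum f - f 0 / \<beta>"
    using suminf_split_head[OF summable_beta_sum[OF assms]] by (simp add: beta_sum_def mult.commute)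
  finally show ?thesis using beta_gt_1 by (simp add: field_simps)
qed

lemma beta_sum_add:
  assumes "\<And>n. \<bar>f n\<bar> \<le> 1" "\<And>n. \<bar>g n\<bar> \<le> 1"
  shows "beta_sum f + beta_sum g = beta_sum (\<lambda>n. f n + g n)"
  unfolding beta_sum_def
  using suminf_add[OF summable_beta_sum[OF assms(1)] summable_beta_sum[OF assms(2)]]
  by (simp add: add_divide_distrib)

lemma expansion_in_S_beta: "expansion b \<in> S_beta \<beta>"
proof -
  have "beta_sum (\<lambda>n. fst (qv (b n))) + beta_sum (\<lambda>n. snd (qv (b n))) \<le> 1 / (\<beta> - 1)"
    by (subst beta_sum_add) (auto intro!: beta_sum_bounds simp: qv_def)
  then show ?thesis
    by (auto simp: expansion_def S_beta_def qv_simps intro!: beta_sum_bounds)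
qed

lemma expansion_sshift:
  "expansion (sshift b)
     = (\<beta> * fst (expansion b) - fst (qv (b 0)), \<beta> * snd (expansion b) - snd (qv (b 0)))"
  using beta_gt_1
    beta_sum_Suc[of "\<lambda>n. fst (qv (b n))"] beta_sum_Suc[of "\<lambda>n. snd (qv (b n))"]
  by (simp add: expansion_def sshift_def qv_simps)

lemma expansion_split:
  "fst (expansion b) = (\<Sum>i<n. fst (qv (b i)) / \<beta> ^ Suc i) + fst (expansion ((sshift ^^ n) b)) / \<beta> ^ n"
  "snd (expansion b) = (\<Sum>i<n. snd (qv (b i)) / \<beta> ^ Suc i) + snd (expansion ((sshift ^^ n) b)) / \<beta> ^ n"
proof (induction n)
  case (Suc n)
  have "expansion ((sshift ^^ n) b) =
      ((fst (qv (b n)) + fst (expansion ((sshift ^^ Suc n) b))) / \<beta>,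
       (snd (qv (b n)) + snd (expansion ((sshift ^^ Suc n) b))) / \<beta>)"
    using expansion_sshift[of "(sshift ^^ n) b"] beta_gt_1
    by (simp add: funpow_sshift_apply field_simps)
  then show "fst (expansion b) = (\<Sum>i<Suc n. fst (qv (b i)) / \<beta> ^ Suc i)
      + fst (expansion ((sshift ^^ Suc n) b)) / \<beta> ^ Suc n"
    "snd (expansion b) = (\<Sum>i<Suc n. snd (qv (b i)) / \<beta> ^ Suc i)
      + snd (expansion ((sshift ^^ Suc n) b)) / \<beta> ^ Suc n"
    using Suc.IH by (simp_all add: add_divide_distrib del: funpow.simps)
qed simp_all

lemma expansion_sum_le_of_zeros:
  assumes "\<forall>i<m. b i = 0"
  shows "fst (expansion b) + snd (expansion b) \<le> 1 / (\<beta> - 1) / \<beta> ^ m"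
proof -
  obtain X Y where XY: "expansion ((sshift ^^ m) b) = (X, Y)" by fastforce
  have "fst (expansion b) = X / \<beta> ^ m" "snd (expansion b) = Y / \<beta> ^ m"
    using expansion_split[of b m] assms unfolding XY by (simp_all add: qv_def)
  moreover have "X + Y \<le> 1 / (\<beta> - 1)"
    using expansion_in_S_beta[of "(sshift ^^ m) b"] unfolding XY by (simp add: S_beta_def)
  ultimately show ?thesis
    using divide_right_mono[of "X + Y" "1 / (\<beta> - 1)" "\<beta> ^ m"] beta_gt_1
    by (simp add: add_divide_distrib)
qed

lemma S_beta_orbit_unique:
  assumes "\<And>n. u n \<in> S_beta \<beta>" "\<And>n. v n \<in> S_beta \<beta>"
    and "\<And>n. u (Suc n) = (\<beta> * fst (u n) - fst (c n), \<beta> * snd (u n) - snd (c n))"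
    and "\<And>n. v (Suc n) = (\<beta> * fst (v n) - fst (c n), \<beta> * snd (v n) - snd (c n))"
  shows "u 0 = v 0"
proof -
  have zero_if_bounded: "d = 0" if "\<And>n. \<bar>\<beta> ^ n * d\<bar> \<le> 1 / (\<beta> - 1)" for d
  proof (rule ccontr)
    assume "d \<noteq> 0"
    obtain n where "1 / (\<beta> - 1) / \<bar>d\<bar> < \<beta> ^ n" using real_arch_pow[OF beta_gt_1] by blast
    then have "1 / (\<beta> - 1) < \<bar>\<beta> ^ n * d\<bar>"
      using \<open>d \<noteq> 0\<close> beta_gt_1 by (simp add: divide_less_eq abs_mult mult_ac)
    then show False using that[of n] by simp
  qed
  have diff: "fst (u n) - fst (v n) = \<beta> ^ n * (fst (u 0) - fst (v 0))"
    "snd (u n) - snd (v n) = \<beta> ^ n * (snd (u 0) - snd (v 0))" for n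
  proof -
    have "fst (u (Suc n)) - fst (v (Suc n)) = \<beta> * (fst (u n) - fst (v n))"
      "snd (u (Suc n)) - snd (v (Suc n)) = \<beta> * (snd (u n) - snd (v n))" for n
      by (simp_all add: assms(3,4) algebra_simps)
    then show "fst (u n) - fst (v n) = \<beta> ^ n * (fst (u 0) - fst (v 0))"
      "snd (u n) - snd (v n) = \<beta> ^ n * (snd (u 0) - snd (v 0))"
      by (induction n) (simp_all add: mult.assoc)
  qed
  have "\<bar>fst (u n) - fst (v n)\<bar> \<le> 1 / (\<beta> - 1)" "\<bar>snd (u n) - snd (v n)\<bar> \<le> 1 / (\<beta> - 1)" for n
    using assms(1,2)[of n] by (auto simp: S_beta_def split: prod.splits)
  then have "fst (u 0) - fst (v 0) = 0" "snd (u 0) - snd (v 0) = 0"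
    by (intro zero_if_bounded; simp only: diff[symmetric])+
  then show ?thesis by (simp add: prod_eq_iff)
qed

lemma expansion_first_digit:
  "b 0 = 1 \<Longrightarrow> 1 / \<beta> \<le> fst (expansion b)"
  "b 0 = 2 \<Longrightarrow> 1 / \<beta> \<le> snd (expansion b)"
  "b 0 \<notin> {1, 2} \<Longrightarrow> fst (expansion b) + snd (expansion b) \<le> 1 / (\<beta> * (\<beta> - 1))"
proof -
  obtain x y where xy: "expansion (sshift b) = (x, y)" by fastforce
  then have "0 \<le> x" "0 \<le> y" "x + y \<le> 1 / (\<beta> - 1)"
    using expansion_in_S_beta[of "sshift b"] by (auto simp: S_beta_def)
  moreover have "fst (expansion b) = (fst (qv (b 0)) + x) / \<beta>"
    "snd (expansion b) = (snd (qv (b 0)) + y) / \<beta>"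
    using expansion_sshift[of b] xy beta_gt_1 by (auto simp: field_simps)
  moreover have "(x + y) / \<beta> \<le> 1 / (\<beta> * (\<beta> - 1))"
    using divide_right_mono[OF \<open>x + y \<le> 1 / (\<beta> - 1)\<close>, of \<beta>] beta_gt_1 by (simp add: ac_simps)
  ultimately show "b 0 = 1 \<Longrightarrow> 1 / \<beta> \<le> fst (expansion b)"
    "b 0 = 2 \<Longrightarrow> 1 / \<beta> \<le> snd (expansion b)"
    "b 0 \<notin> {1, 2} \<Longrightarrow> fst (expansion b) + snd (expansion b) \<le> 1 / (\<beta> * (\<beta> - 1))"
    using beta_gt_1 by (auto simp: qv_def divide_right_mono add_divide_distrib[symmetric])
qed

definition visits :: "(real \<times> real) set \<Rightarrow> (nat \<Rightarrow> nat) \<Rightarrow> nat set" where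
  "visits R b = {n. expansion ((sshift ^^ n) b) \<in> R}"

lemma visits_sshift: "visits R (sshift b) = {m. Suc m \<in> visits R b}"
  by (simp add: visits_def funpow_sshift_Suc del: funpow.simps)

lemma borel_measurable_beta_sum:
  assumes "\<And>i. f i \<in> borel_measurable M" "\<And>i x. \<bar>f i x\<bar> \<le> 1"
  shows "(\<lambda>x. beta_sum (\<lambda>i. f i x)) \<in> borel_measurable M"
proof (rule borel_measurable_LIMSEQ_metric)
  show "(\<lambda>x. \<Sum>i<n. f i x / \<beta> ^ Suc i) \<in> borel_measurable M" for n
    using assms(1) by measurable
  show "(\<lambda>n. \<Sum>i<n. f i x / \<beta> ^ Suc i) \<longlonglongrightarrow> beta_sum (\<lambda>i. f i x)" for x
    unfolding beta_sum_def by (rule summable_LIMSEQ) (rule summable_beta_sum[OF assms(2)])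
qed

lemma borel_measurable_expansion: "expansion \<in> borel_measurable P_M"
proof -
  have "(\<lambda>b. fst (qv (b i))) \<in> borel_measurable P_M" "(\<lambda>b. snd (qv (b i))) \<in> borel_measurable P_M" for i
    by (rule measurable_digit_comp; simp)+
  then show ?thesis
    unfolding expansion_def[abs_def]
    by (intro borel_measurable_Pair borel_measurable_beta_sum) (auto simp: qv_def)
qed

lemma pred_expansion_orbit:
  "R \<in> sets borel \<Longrightarrow> Measurable.pred P_M (\<lambda>b. expansion ((sshift ^^ n) b) \<in> R)"
  by (rule pred_sets2[OF _ measurable_compose[OF measurable_funpow_sshift_P_M borel_measurable_expansion]])

end

context small_beta
begin

lemma two_inverse_le: "1 / \<beta> + 1 / \<beta> \<le> 1 / (\<beta> * (\<beta> - 1))"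
  using beta_gt_1 beta_less by (simp add: field_simps)

lemma S_beta_cases:
  assumes "z \<in> S_beta \<beta>"
  obtains "z \<in> E0 \<beta>" | "z \<in> E1 \<beta>" | "z \<in> E2 \<beta>"
    | "z \<in> C01 \<beta>" | "z \<in> C12 \<beta>" | "z \<in> C02 \<beta>" | "z \<in> C012 \<beta>"
proof (cases z)
  case (Pair x y)
  then show ?thesis
    using assms that
    by (cases "x < 1 / \<beta>"; cases "y < 1 / \<beta>"; cases "x + y \<le> 1 / (\<beta> * (\<beta> - 1))")
       (auto simp: region_defs)
qed

lemma Cset_disjoint: "z \<in> Cset \<beta> \<Longrightarrow> z \<notin> E0 \<beta> \<union> E1 \<beta> \<union> E2 \<beta>"
  and C012_disjoint: "z \<in> C012 \<beta> \<Longrightarrow> z \<notin> E0 \<beta> \<union> E1 \<beta> \<union> E2 \<beta> \<union> Cset \<beta>"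
  by (cases z; auto simp: region_defs)+

lemma dig_regions:
  "z \<in> E0 \<beta> \<Longrightarrow> dig \<beta> (\<omega>, \<upsilon>, z) = 0"
  "z \<in> E1 \<beta> \<Longrightarrow> dig \<beta> (\<omega>, \<upsilon>, z) = 1"
  "z \<in> E2 \<beta> \<Longrightarrow> dig \<beta> (\<omega>, \<upsilon>, z) = 2"
  "z \<in> C01 \<beta> \<Longrightarrow> dig \<beta> (\<omega>, \<upsilon>, z) = (if \<omega> 0 = 0 then 0 else 1)"
  "z \<in> C12 \<beta> \<Longrightarrow> dig \<beta> (\<omega>, \<upsilon>, z) = (if \<omega> 0 = 0 then 1 else 2)"
  "z \<in> C02 \<beta> \<Longrightarrow> dig \<beta> (\<omega>, \<upsilon>, z) = (if \<omega> 0 = 0 then 0 else 2)"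
  "z \<in> C012 \<beta> \<Longrightarrow> dig \<beta> (\<omega>, \<upsilon>, z) = \<upsilon> 0"
  using two_inverse_le Cset_disjoint[of z] C012_disjoint[of z]
  by (cases z; auto simp: dig_def region_defs)+

lemma K_apply:
  "K \<beta> (\<omega>, \<upsilon>, z) =
    (if z \<in> Cset \<beta> then sshift \<omega> else \<omega>, if z \<in> C012 \<beta> then sshift \<upsilon> else \<upsilon>,
     (\<beta> * fst z - fst (qv (dig \<beta> (\<omega>, \<upsilon>, z))), \<beta> * snd z - snd (qv (dig \<beta> (\<omega>, \<upsilon>, z)))))"
  using Cset_disjoint[of z] C012_disjoint[of z] by (auto simp: K_def)

lemma dig_admissible:
  fixes \<omega> \<upsilon> :: "nat \<Rightarrow> nat"
  assumes "(x, y) \<in> S_beta \<beta>" "\<upsilon> 0 \<in> {0, 1, 2}"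
  defines "d \<equiv> dig \<beta> (\<omega>, \<upsilon>, (x, y))"
  shows "d = 0 \<and> x + y \<le> 1 / (\<beta> * (\<beta> - 1)) \<or> d = 1 \<and> 1 / \<beta> \<le> x \<or> d = 2 \<and> 1 / \<beta> \<le> y"
  using assms(1)
  by (cases rule: S_beta_cases)
     (use assms(2) two_inverse_le in \<open>auto simp: d_def dig_regions region_defs\<close>)

lemma admissible_step_in_S_beta:
  assumes "(x, y) \<in> S_beta \<beta>"
    and "d = 0 \<and> x + y \<le> 1 / (\<beta> * (\<beta> - 1)) \<or> d = 1 \<and> 1 / \<beta> \<le> x \<or> d = 2 \<and> 1 / \<beta> \<le> y"
  shows "(\<beta> * x - fst (qv d), \<beta> * y - snd (qv d)) \<in> S_beta \<beta>"
proof -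
  have xy: "0 \<le> x" "0 \<le> y" "x + y \<le> 1 / (\<beta> - 1)"
    using assms(1) by (auto simp: S_beta_def)
  then have "\<beta> * (x + y) \<le> \<beta> * (1 / (\<beta> - 1))"
    using beta_gt_1 by (intro mult_left_mono) auto
  have c: "\<beta> * (1 / (\<beta> * (\<beta> - 1))) = 1 / (\<beta> - 1)" "\<beta> * (1 / (\<beta> - 1)) - 1 = 1 / (\<beta> - 1)"
    using beta_gt_1 by (simp_all add: field_simps)
  have scale: "1 \<le> \<beta> * t" if "1 / \<beta> \<le> t" for t
    using that beta_gt_1 by (simp add: field_simps)
  from assms(2) show ?thesis
  proof (elim disjE conjE)
    assume "d = 0" "x + y \<le> 1 / (\<beta> * (\<beta> - 1))"
    moreover from this have "\<beta> * (x + y) \<le> \<beta> * (1 / (\<beta> * (\<beta> - 1)))"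
      using beta_gt_1 by (intro mult_left_mono) auto
    ultimately show ?thesis using xy beta_gt_1 c by (simp add: S_beta_def qv_def algebra_simps)
  next
    assume "d = 1" "1 / \<beta> \<le> x"
    then show ?thesis
      using xy \<open>\<beta> * (x + y) \<le> \<beta> * (1 / (\<beta> - 1))\<close> c scale[of x] beta_gt_1
      by (simp add: S_beta_def qv_def algebra_simps)
  next
    assume "d = 2" "1 / \<beta> \<le> y"
    then show ?thesis
      using xy \<open>\<beta> * (x + y) \<le> \<beta> * (1 / (\<beta> - 1))\<close> c scale[of y] beta_gt_1
      by (simp add: S_beta_def qv_def algebra_simps)
  qed
qed

lemma K_in_S_beta:
  assumes "z \<in> S_beta \<beta>" "\<upsilon> 0 \<in> {0, 1, 2}"
  shows "snd (snd (K \<beta> (\<omega>, \<upsilon>, z))) \<in> S_beta \<beta>"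
  using assms admissible_step_in_S_beta dig_admissible by (cases z) (simp add: K_apply)

text \<open>At a point of \<^term>\<open>Cset \<beta>\<close>, the value of the coin \<open>\<omega>\<^sub>1\<close> that makes \<^term>\<open>K \<beta>\<close>
  subtract the digit \<open>d\<close>.\<close>
definition choice_bit :: "real \<times> real \<Rightarrow> nat \<Rightarrow> nat" where
  "choice_bit z d = (if d = 0 \<or> (z \<in> C12 \<beta> \<and> d = 1) then 0 else 1)"

lemma choice_bit_dig:
  assumes "z \<in> Cset \<beta>" "\<omega> 0 \<in> {0, 1}"
  shows "choice_bit z (dig \<beta> (\<omega>, \<upsilon>, z)) = \<omega> 0"
  using assms by (cases z) (auto simp: Cset_def dig_regions choice_bit_def region_defs)

lemma dig_expansion:
  assumes "b 0 \<in> {0, 1, 2}"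
    and "expansion b \<in> Cset \<beta> \<Longrightarrow> \<omega> 0 = choice_bit (expansion b) (b 0)"
    and "expansion b \<in> C012 \<beta> \<Longrightarrow> \<upsilon> 0 = b 0"
  shows "dig \<beta> (\<omega>, \<upsilon>, expansion b) = b 0"
  using expansion_in_S_beta[of b]
proof (cases rule: S_beta_cases)
  case 7
  then show ?thesis using assms(3) by (simp add: dig_regions)
qed (use assms expansion_first_digit[of b] in \<open>auto simp: dig_regions choice_bit_def region_defs\<close>)

section \<open>Decoding digit sequences\<close>

text \<open>The coins are read off a digit sequence: \<open>\<omega>\<^sub>k\<close> and \<open>\<upsilon>\<^sub>k\<close> are fixed by the digits
  chosen at the \<open>k\<close>-th visit of the orbit to \<^term>\<open>Cset \<beta>\<close> and to \<^term>\<open>C012 \<beta>\<close>;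
  coins that are never consulted are set to \<open>0\<close>.\<close>
definition omega_of :: "(nat \<Rightarrow> nat) \<Rightarrow> nat \<Rightarrow> nat" where
  "omega_of b k =
     (if holds_at_rank (visits (Cset \<beta>) b) (\<lambda>n. choice_bit (expansion ((sshift ^^ n) b)) (b n) = 1) k
      then 1 else 0)"

definition upsilon_of :: "(nat \<Rightarrow> nat) \<Rightarrow> nat \<Rightarrow> nat" where
  "upsilon_of b k =
     (if holds_at_rank (visits (C012 \<beta>) b) (\<lambda>n. b n = 1) k then 1
      else if holds_at_rank (visits (C012 \<beta>) b) (\<lambda>n. b n = 2) k then 2 else 0)"

definition point_of :: "(nat \<Rightarrow> nat) \<Rightarrow> point" where
  "point_of b = (omega_of b, upsilon_of b, expansion b)"

lemma omega_of_sshift: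
  "omega_of (sshift b) k = omega_of b (k + (if 0 \<in> visits (Cset \<beta>) b then 1 else 0))"
  unfolding omega_of_def visits_sshift
  using holds_at_rank_shift[of "visits (Cset \<beta>) b" "\<lambda>n. choice_bit (expansion ((sshift ^^ n) b)) (b n) = 1" k]
  by (simp add: funpow_sshift_Suc sshift_apply del: funpow.simps)

lemma upsilon_of_sshift:
  "upsilon_of (sshift b) k = upsilon_of b (k + (if 0 \<in> visits (C012 \<beta>) b then 1 else 0))"
  unfolding upsilon_of_def visits_sshift
  using holds_at_rank_shift[of "visits (C012 \<beta>) b" "\<lambda>n. b n = 1" k]
    holds_at_rank_shift[of "visits (C012 \<beta>) b" "\<lambda>n. b n = 2" k]
  by (simp add: sshift_apply)

lemma omega_of_0: "expansion b \<in> Cset \<beta> \<Longrightarrow> omega_of b 0 = choice_bit (expansion b) (b 0)"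
  using holds_at_rank_iff[of 0 "visits (Cset \<beta>) b" 0]
  by (auto simp: omega_of_def visits_def choice_bit_def)

lemma upsilon_of_0: "b \<in> space P_M \<Longrightarrow> expansion b \<in> C012 \<beta> \<Longrightarrow> upsilon_of b 0 = b 0"
  using holds_at_rank_iff[of 0 "visits (C012 \<beta>) b" 0]
  by (auto simp: upsilon_of_def visits_def space_P_M)

lemma dig_point_of: "b \<in> space P_M \<Longrightarrow> dig \<beta> (point_of b) = b 0"
  unfolding point_of_def by (rule dig_expansion) (auto simp: space_P_M omega_of_0 upsilon_of_0)

lemma K_point_of:
  assumes "b \<in> space P_M"
  shows "K \<beta> (point_of b) = point_of (sshift b)"
proof -
  have "0 \<in> visits (Cset \<beta>) b \<longleftrightarrow> expansion b \<in> Cset \<beta>"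
    "0 \<in> visits (C012 \<beta>) b \<longleftrightarrow> expansion b \<in> C012 \<beta>"
    by (simp_all add: visits_def)
  then have "omega_of (sshift b) = (if expansion b \<in> Cset \<beta> then sshift (omega_of b) else omega_of b)"
    "upsilon_of (sshift b) = (if expansion b \<in> C012 \<beta> then sshift (upsilon_of b) else upsilon_of b)"
    by (auto simp: fun_eq_iff omega_of_sshift upsilon_of_sshift sshift_apply)
  then show ?thesis
    using dig_point_of[OF assms]
    by (simp add: point_of_def K_apply expansion_sshift)
qed

lemma funpow_K_point_of: "b \<in> space P_M \<Longrightarrow> (K \<beta> ^^ n) (point_of b) = point_of ((sshift ^^ n) b)"
  by (induction n) (simp_all add: K_point_of funpow_sshift_in_space_P_M)

lemma phi_point_of: "b \<in> space P_M \<Longrightarrow> phi \<beta> (point_of b) = b"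
  by (simp add: fun_eq_iff phi_def funpow_K_point_of dig_point_of funpow_sshift_in_space_P_M
      funpow_sshift_apply)

lemma point_of_in_space: "b \<in> space P_M \<Longrightarrow> point_of b \<in> space (X_M \<beta>)"
  by (simp add: space_X_M point_of_def omega_of_def upsilon_of_def expansion_in_S_beta)

lemma K_in_space:
  assumes "p \<in> space (X_M \<beta>)"
  shows "K \<beta> p \<in> space (X_M \<beta>)"
proof -
  obtain \<omega> \<upsilon> z where p: "p = (\<omega>, \<upsilon>, z)" by (cases p) auto
  have "z \<in> S_beta \<beta>" "\<upsilon> 0 \<in> {0, 1, 2}"
    using assms by (auto simp: p space_X_M)
  then have "snd (snd (K \<beta> p)) \<in> S_beta \<beta>"
    unfolding p by (rule K_in_S_beta)
  then show ?thesis
    using assms by (auto simp: p space_X_M K_apply sshift_apply)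
qed

lemma funpow_K_in_space: "p \<in> space (X_M \<beta>) \<Longrightarrow> (K \<beta> ^^ n) p \<in> space (X_M \<beta>)"
  by (induction n) (simp_all add: K_in_space)

lemma phi_in_space: "p \<in> space (X_M \<beta>) \<Longrightarrow> phi \<beta> p \<in> space P_M"
  unfolding space_P_M phi_def using dig_in_digits[OF funpow_K_in_space] by blast

lemma position_eq_expansion:
  assumes "p \<in> space (X_M \<beta>)"
  shows "snd (snd p) = expansion (phi \<beta> p)"
proof -
  have "snd (snd ((K \<beta> ^^ 0) p)) = expansion ((sshift ^^ 0) (phi \<beta> p))"
  proof (rule S_beta_orbit_unique)
    show "snd (snd ((K \<beta> ^^ n) p)) \<in> S_beta \<beta>" for n
      using funpow_K_in_space[OF assms] by (simp add: space_X_M)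
    show "expansion ((sshift ^^ n) (phi \<beta> p)) \<in> S_beta \<beta>" for n
      by (rule expansion_in_S_beta)
    show "snd (snd ((K \<beta> ^^ Suc n) p)) =
      (\<beta> * fst (snd (snd ((K \<beta> ^^ n) p))) - fst (qv (phi \<beta> p n)),
       \<beta> * snd (snd (snd ((K \<beta> ^^ n) p))) - snd (qv (phi \<beta> p n)))" for n
      by (simp add: position_K phi_def)
    show "expansion ((sshift ^^ Suc n) (phi \<beta> p)) =
      (\<beta> * fst (expansion ((sshift ^^ n) (phi \<beta> p))) - fst (qv (phi \<beta> p n)),
       \<beta> * snd (expansion ((sshift ^^ n) (phi \<beta> p))) - snd (qv (phi \<beta> p n)))" for n
      using expansion_sshift[of "(sshift ^^ n) (phi \<beta> p)"] by (simp add: funpow_sshift_apply)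
  qed
  then show ?thesis by simp
qed

lemma orbit_position_eq_expansion:
  "p \<in> space (X_M \<beta>) \<Longrightarrow> snd (snd ((K \<beta> ^^ n) p)) = expansion ((sshift ^^ n) (phi \<beta> p))"
  using position_eq_expansion[OF funpow_K_in_space] by (simp add: phi_funpow_K)

lemma fst_funpow_K:
  assumes "p \<in> space (X_M \<beta>)"
  shows "fst ((K \<beta> ^^ n) p) = (sshift ^^ card_below (visits (Cset \<beta>) (phi \<beta> p)) n) (fst p)"
proof (induction n)
  case (Suc n)
  obtain \<omega> \<upsilon> z where e: "(K \<beta> ^^ n) p = (\<omega>, \<upsilon>, z)" by (cases "(K \<beta> ^^ n) p") auto
  have "n \<in> visits (Cset \<beta>) (phi \<beta> p) \<longleftrightarrow> z \<in> Cset \<beta>"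
    using orbit_position_eq_expansion[OF assms, of n] by (simp add: visits_def e)
  then show ?case using Suc e by (simp add: K_apply card_below_Suc)
qed simp

lemma fst_snd_funpow_K:
  assumes "p \<in> space (X_M \<beta>)"
  shows "fst (snd ((K \<beta> ^^ n) p)) = (sshift ^^ card_below (visits (C012 \<beta>) (phi \<beta> p)) n) (fst (snd p))"
proof (induction n)
  case (Suc n)
  obtain \<omega> \<upsilon> z where e: "(K \<beta> ^^ n) p = (\<omega>, \<upsilon>, z)" by (cases "(K \<beta> ^^ n) p") auto
  have "n \<in> visits (C012 \<beta>) (phi \<beta> p) \<longleftrightarrow> z \<in> C012 \<beta>"
    using orbit_position_eq_expansion[OF assms, of n] by (simp add: visits_def e)
  then show ?case using Suc e by (simp add: K_apply card_below_Suc)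
qed simp

lemma Z_eq:
  "Z \<beta> = {p \<in> space (X_M \<beta>). infinite (visits (Cset \<beta>) (phi \<beta> p)) \<and> infinite (visits (C012 \<beta>) (phi \<beta> p))}"
  unfolding Z_def visits_def by (auto simp: orbit_position_eq_expansion)

lemma funpow_K_eq:
  assumes "p \<in> space (X_M \<beta>)"
  shows "(K \<beta> ^^ n) p = ((sshift ^^ card_below (visits (Cset \<beta>) (phi \<beta> p)) n) (fst p),
    (sshift ^^ card_below (visits (C012 \<beta>) (phi \<beta> p)) n) (fst (snd p)),
    expansion ((sshift ^^ n) (phi \<beta> p)))"
  using fst_funpow_K[OF assms] fst_snd_funpow_K[OF assms] orbit_position_eq_expansion[OF assms]
  by (simp add: prod_eq_iff)

lemma omega_of_phi:
  assumes "p \<in> Z \<beta>"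
  shows "omega_of (phi \<beta> p) k = fst p k"
proof -
  define b where "b = phi \<beta> p"
  define V where "V = visits (Cset \<beta>) b"
  define n where "n = enumerate V k"
  have sp: "p \<in> space (X_M \<beta>)" and inf: "infinite V"
    using assms by (auto simp: Z_eq V_def b_def)
  have n: "expansion ((sshift ^^ n) b) \<in> Cset \<beta>" "card_below V n = k"
    using enumerate_in_set[OF inf] card_below_enumerate[OF inf] by (auto simp: n_def V_def visits_def)
  have coin: "fst p i \<in> {0, 1}" for i
    using sp by (simp add: space_X_M)
  have "b n = dig \<beta> ((sshift ^^ k) (fst p),
      (sshift ^^ card_below (visits (C012 \<beta>) b) n) (fst (snd p)), expansion ((sshift ^^ n) b))"
    using funpow_K_eq[OF sp, of n] n(2) by (simp add: b_def V_def phi_def)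
  then have "choice_bit (expansion ((sshift ^^ n) b)) (b n) = fst p k"
    using choice_bit_dig[OF n(1)] coin by (simp add: funpow_sshift_apply)
  then show ?thesis
    using coin[of k]
    unfolding b_def[symmetric] omega_of_def V_def[symmetric] holds_at_rank_enumerate[OF inf]
      n_def[symmetric]
    by auto
qed

lemma upsilon_of_phi:
  assumes "p \<in> Z \<beta>"
  shows "upsilon_of (phi \<beta> p) k = fst (snd p) k"
proof -
  define b where "b = phi \<beta> p"
  define V where "V = visits (C012 \<beta>) b"
  define n where "n = enumerate V k"
  have sp: "p \<in> space (X_M \<beta>)" and inf: "infinite V"
    using assms by (auto simp: Z_eq V_def b_def)
  have n: "expansion ((sshift ^^ n) b) \<in> C012 \<beta>" "card_below V n = k"
    using enumerate_in_set[OF inf] card_below_enumerate[OF inf] by (auto simp: n_def V_def visits_def)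
  have coin: "fst (snd p) k \<in> {0, 1, 2}"
    using sp by (simp add: space_X_M)
  have "b n = dig \<beta> ((sshift ^^ card_below (visits (Cset \<beta>) b) n) (fst p),
      (sshift ^^ k) (fst (snd p)), expansion ((sshift ^^ n) b))"
    using funpow_K_eq[OF sp, of n] n(2) by (simp add: b_def V_def phi_def)
  then have "b n = fst (snd p) k"
    using n(1) by (simp add: dig_regions funpow_sshift_apply)
  then show ?thesis
    using coin
    unfolding b_def[symmetric] upsilon_of_def V_def[symmetric] holds_at_rank_enumerate[OF inf]
      n_def[symmetric]
    by auto
qed

lemma point_of_phi:
  assumes "p \<in> Z \<beta>"
  shows "point_of (phi \<beta> p) = p"
proof -
  have "p \<in> space (X_M \<beta>)"
    using assms by (simp add: Z_eq)
  then show ?thesis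
    using omega_of_phi[OF assms] upsilon_of_phi[OF assms] position_eq_expansion
    by (simp add: point_of_def fun_eq_iff prod_eq_iff)
qed

definition good_seqs :: "(nat \<Rightarrow> nat) set" where
  "good_seqs = {b \<in> space P_M. infinite (visits (Cset \<beta>) b) \<and> infinite (visits (C012 \<beta>) b)}"

lemma point_of_in_Z: "b \<in> good_seqs \<Longrightarrow> point_of b \<in> Z \<beta>"
  by (simp add: Z_eq good_seqs_def point_of_in_space phi_point_of)

lemma phi_in_good_seqs: "p \<in> Z \<beta> \<Longrightarrow> phi \<beta> p \<in> good_seqs"
  by (simp add: Z_eq good_seqs_def phi_in_space)

lemma phi_image_Z_Int: "phi \<beta> ` (Z \<beta> \<inter> A) = {b \<in> good_seqs. point_of b \<in> A}"
proof (intro equalityI subsetI)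
  fix b assume "b \<in> phi \<beta> ` (Z \<beta> \<inter> A)"
  then show "b \<in> {b \<in> good_seqs. point_of b \<in> A}"
    using phi_in_good_seqs point_of_phi by auto
next
  fix b assume b: "b \<in> {b \<in> good_seqs. point_of b \<in> A}"
  then have "phi \<beta> (point_of b) = b"
    by (simp add: good_seqs_def phi_point_of)
  then show "b \<in> phi \<beta> ` (Z \<beta> \<inter> A)"
    using b point_of_in_Z by (metis (mono_tags) IntI image_eqI mem_Collect_eq)
qed

lemma bij_betw_phi: "bij_betw (phi \<beta>) (Z \<beta>) good_seqs"
proof -
  have "inj_on (phi \<beta>) (Z \<beta>)"
    by (rule inj_onI) (metis point_of_phi)
  then show ?thesis using phi_image_Z_Int[of UNIV] by (simp add: bij_betw_def)
qed

lemma the_inv_into_phi: "b \<in> good_seqs \<Longrightarrow> the_inv_into (Z \<beta>) (phi \<beta>) b = point_of b"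
  using point_of_in_Z by (intro the_inv_into_f_eq bij_betw_imp_inj_on[OF bij_betw_phi])
    (auto simp: good_seqs_def phi_point_of)

lemma sshift_good_seqs: "b \<in> good_seqs \<Longrightarrow> sshift b \<in> good_seqs"
  using finite_vimage_Suc_iff[of "visits (Cset \<beta>) b"] finite_vimage_Suc_iff[of "visits (C012 \<beta>) b"]
  by (auto simp: good_seqs_def visits_sshift vimage_def sshift_in_space_P_M)

lemma K_Z: "p \<in> Z \<beta> \<Longrightarrow> K \<beta> p \<in> Z \<beta>"
  using K_point_of[of "phi \<beta> p"] point_of_phi[of p] point_of_in_Z sshift_good_seqs phi_in_good_seqs
  by (metis (no_types, lifting) good_seqs_def mem_Collect_eq)

section \<open>Almost every digit sequence decodes into \<open>Z\<close>\<close>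

lemma one_add_div_power_less:
  assumes "1 / (2 - \<beta>) < \<beta> ^ m"
  shows "1 + 1 / (\<beta> - 1) / \<beta> ^ m < 1 / (\<beta> - 1)"
proof -
  have "1 < \<beta> ^ m * (2 - \<beta>)"
    using assms beta_less by (simp add: divide_less_eq)
  then have "1 / \<beta> ^ m < 2 - \<beta>"
    using beta_gt_1 by (simp add: divide_less_eq mult.commute)
  then have "1 / (\<beta> - 1) * (1 / \<beta> ^ m) < 1 / (\<beta> - 1) * (2 - \<beta>)"
    using beta_gt_1 by (intro mult_strict_left_mono) auto
  moreover have "1 / (\<beta> - 1) * (2 - \<beta>) = 1 / (\<beta> - 1) - 1"
    using beta_gt_1 by (simp add: field_simps)
  ultimately show ?thesis by simp
qed

lemma expansion_in_Cset_of_occurs: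
  assumes b: "occurs (1 # replicate m 0) b 0"
    and large: "1 / (\<beta> - 1) < \<beta> ^ m" "1 / (2 - \<beta>) < \<beta> ^ m"
  shows "expansion b \<in> Cset \<beta>"
proof -
  define t where "t = 1 / (\<beta> - 1)"
  obtain X Y where XY: "expansion (sshift b) = (X, Y)" by fastforce
  have "b 0 = 1" "\<forall>i<m. sshift b i = 0"
    using b by (auto simp: occurs_def nth_Cons' sshift_apply)
  then have x: "fst (expansion b) = (1 + X) / \<beta>" and y: "snd (expansion b) = Y / \<beta>"
    and XY_bounds: "0 \<le> X" "0 \<le> Y" "X + Y \<le> t / \<beta> ^ m"
    using expansion_sshift[of b] expansion_in_S_beta[of "sshift b"]
      expansion_sum_le_of_zeros[of m "sshift b"] beta_gt_1
    unfolding XY by (simp_all add: qv_def field_simps S_beta_def t_def)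
  have "t / \<beta> ^ m < 1"
    using large(1) beta_gt_1 by (simp add: t_def pos_divide_less_eq mult.commute)
  then have "Y < 1"
    using XY_bounds by linarith
  have "1 + t / \<beta> ^ m < t"
    using one_add_div_power_less[OF large(2)] by (simp add: t_def)
  then have "1 + X + Y \<le> t"
    using XY_bounds by linarith
  have "1 / \<beta> \<le> fst (expansion b)" "snd (expansion b) < 1 / \<beta>"
    "fst (expansion b) + snd (expansion b) \<le> t / \<beta>"
    unfolding x y using XY_bounds \<open>Y < 1\<close> \<open>1 + X + Y \<le> t\<close> beta_gt_1
    by (simp_all add: divide_right_mono divide_strict_right_mono add_divide_distrib[symmetric])
  then show ?thesis
    using expansion_in_S_beta[of b]
    by (cases "expansion b") (simp add: C01_def Cset_def S_beta_def t_def mult.commute)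
qed

lemma inverse_powers_sum_less: "1 / \<beta> + 1 / \<beta>^2 + 1 / \<beta>^4 < 1 / (\<beta> * (\<beta> - 1))"
proof -
  have "0 < (\<beta> - 1)^2"
    using beta_gt_1 by simp
  then have square: "0 < \<beta>^2 - 2 * \<beta> + 1"
    using power2_diff[of \<beta> 1] by simp
  have "\<beta>^4 \<le> \<beta>^3 + \<beta>"
    using mult_left_mono[OF beta_cube_le, of \<beta>] beta_gt_1
    by (simp add: algebra_simps power_Suc[symmetric] del: power_Suc)
  moreover have "(\<beta> - 1) * (\<beta>^3 + \<beta>^2 + 1) = \<beta>^4 - \<beta>^2 + \<beta> - 1"
    by (simp add: algebra_simps power2_eq_square power3_eq_cube numeral_eq_Suc)
  ultimately have "(\<beta> - 1) * (\<beta>^3 + \<beta>^2 + 1) < \<beta>^3"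
    using square by simp
  then have "(\<beta>^3 + \<beta>^2 + 1) / \<beta>^4 < (\<beta>^3 / (\<beta> - 1)) / \<beta>^4"
    using beta_gt_1 by (intro divide_strict_right_mono) (simp_all add: less_divide_eq mult.commute)
  moreover have "1 / \<beta> + 1 / \<beta>^2 + 1 / \<beta>^4 = (\<beta>^3 + \<beta>^2 + 1) / \<beta>^4"
    "(\<beta>^3 / (\<beta> - 1)) / \<beta>^4 = 1 / (\<beta> * (\<beta> - 1))"
    using beta_gt_1 by (simp_all add: field_simps numeral_eq_Suc)
  ultimately show ?thesis by simp
qed

text \<open>This is where \<open>\<beta> \<le> \<beta>\<^sub>*\<close> is needed in full: it lets the digit block \<open>1202\<close>
  reach \<^term>\<open>C012 \<beta>\<close>.\<close>
lemma inverse_le_inverse_powers: "1 / \<beta> \<le> 1 / \<beta>^2 + 1 / \<beta>^4"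
proof -
  have "1 / \<beta> = \<beta>^3 / \<beta>^4" "1 / \<beta>^2 + 1 / \<beta>^4 = (\<beta>^2 + 1) / \<beta>^4"
    using beta_gt_1 by (simp_all add: field_simps numeral_eq_Suc)
  then show ?thesis
    using beta_cube_le beta_gt_1 by (simp add: divide_right_mono)
qed

lemma expansion_in_C012_of_occurs:
  assumes b: "occurs ([1, 2, 0, 2] @ replicate m 0) b 0"
    and large: "1 / (\<beta> - 1) / (1 / (\<beta> * (\<beta> - 1)) - (1 / \<beta> + 1 / \<beta>^2 + 1 / \<beta>^4)) < \<beta> ^ m"
  shows "expansion b \<in> C012 \<beta>"
proof -
  define t where "t = 1 / (\<beta> - 1)"
  define s where "s = 1 / \<beta> + 1 / \<beta>^2 + 1 / \<beta>^4"
  define c where "c = 1 / (\<beta> * (\<beta> - 1))"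
  obtain X Y where XY: "expansion ((sshift ^^ 4) b) = (X, Y)" by fastforce
  have digits: "b 0 = 1" "b 1 = 2" "b 2 = 0" "b 3 = 2" "\<forall>i<m. (sshift ^^ 4) b i = 0"
    using b by (auto simp: occurs_def funpow_sshift_apply nth_append dest!: spec[of _ "_ + 4"])
  have XY_bounds: "0 \<le> X" "0 \<le> Y" "X + Y \<le> t / \<beta> ^ m"
    using expansion_in_S_beta[of "(sshift ^^ 4) b"] expansion_sum_le_of_zeros[OF digits(5)]
    unfolding XY by (simp_all add: S_beta_def t_def)
  have x: "fst (expansion b) = 1 / \<beta> + X / \<beta>^4"
    and y: "snd (expansion b) = 1 / \<beta>^2 + 1 / \<beta>^4 + Y / \<beta>^4"
    using expansion_split[of b 4] digits(1-4) unfolding XY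
    by (simp_all add: numeral_eq_Suc qv_def del: funpow.simps)
  have "t / \<beta> ^ m < c - s"
  proof -
    have "0 < c - s" using inverse_powers_sum_less by (simp add: c_def s_def)
    moreover have "t / (c - s) < \<beta> ^ m" using large by (simp add: t_def c_def s_def)
    ultimately have "t < \<beta> ^ m * (c - s)" by (simp add: pos_divide_less_eq)
    then show ?thesis using beta_gt_1 by (simp add: pos_divide_less_eq mult.commute)
  qed
  have "fst (expansion b) + snd (expansion b) = s + (X / \<beta>^4 + Y / \<beta>^4)"
    unfolding x y s_def by simp
  also have "\<dots> \<le> s + (X + Y)"
    using XY_bounds beta_gt_1
    by (simp add: add_divide_distrib[symmetric] divide_le_eq one_le_power mult_le_cancel_left1)
  also have "\<dots> < c"
    using XY_bounds(3) \<open>t / \<beta> ^ m < c - s\<close> by simp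
  finally have sum: "fst (expansion b) + snd (expansion b) \<le> c" by simp
  have "0 \<le> X / \<beta>^4" "0 \<le> Y / \<beta>^4"
    using XY_bounds beta_gt_1 by simp_all
  then have "1 / \<beta> \<le> fst (expansion b)" "1 / \<beta> \<le> snd (expansion b)"
    unfolding x y using inverse_le_inverse_powers by (simp_all add: add_increasing2)
  with sum show ?thesis
    using expansion_in_S_beta[of b] by (cases "expansion b") (simp add: C012_def c_def)
qed

lemma AE_good_seqs: "AE b in P_M. b \<in> good_seqs"
proof -
  obtain m1 where m1: "max (1 / (\<beta> - 1)) (1 / (2 - \<beta>)) < \<beta> ^ m1"
    using real_arch_pow[OF beta_gt_1] by blast
  obtain m2 where m2:
    "1 / (\<beta> - 1) / (1 / (\<beta> * (\<beta> - 1)) - (1 / \<beta> + 1 / \<beta>^2 + 1 / \<beta>^4)) < \<beta> ^ m2"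
    using real_arch_pow[OF beta_gt_1] by blast
  define w1 where "w1 = 1 # replicate m1 (0::nat)"
  define w2 where "w2 = [1, 2, 0, 2] @ replicate m2 (0::nat)"
  have AE_occurs: "AE b in P_M. infinite {n. occurs w b n}" if "set w \<subseteq> {0, 1, 2}" for w
    unfolding P_M_eq using that
    by (intro digits.AE_infinitely_many_occurs) (auto simp: measure_uniform_count_measure)
  have visits_Cset: "n \<in> visits (Cset \<beta>) b" if "occurs w1 b n" for b n
    using expansion_in_Cset_of_occurs[of m1 "(sshift ^^ n) b"] that m1
    by (simp add: visits_def w1_def occurs_funpow_sshift)
  have visits_C012: "n \<in> visits (C012 \<beta>) b" if "occurs w2 b n" for b n
    using expansion_in_C012_of_occurs[of m2 "(sshift ^^ n) b"] that m2
    by (simp add: visits_def w2_def occurs_funpow_sshift)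
  have "set w1 \<subseteq> {0, 1, 2}" "set w2 \<subseteq> {0, 1, 2}"
    by (auto simp: w1_def w2_def set_replicate_conv_if)
  then have "AE b in P_M. infinite {n. occurs w1 b n}" "AE b in P_M. infinite {n. occurs w2 b n}"
    by (simp_all add: AE_occurs)
  then show ?thesis
    using AE_space
  proof eventually_elim
    case (elim b)
    have "{n. occurs w1 b n} \<subseteq> visits (Cset \<beta>) b" "{n. occurs w2 b n} \<subseteq> visits (C012 \<beta>) b"
      using visits_Cset visits_C012 by blast+
    then show ?case
      using elim infinite_super unfolding good_seqs_def by blast
  qed
qed

lemma choice_bit_eq_1: "choice_bit z d = 1 \<longleftrightarrow> \<not> (d = 0 \<or> (z \<in> C12 \<beta> \<and> d = 1))"
  by (simp add: choice_bit_def)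

lemma measurable_omega_of: "omega_of \<in> measurable P_M Omega_M"
proof -
  have "Measurable.pred P_M (\<lambda>b. holds_at_rank (visits (Cset \<beta>) b)
      (\<lambda>n. choice_bit (expansion ((sshift ^^ n) b)) (b n) = 1) k)" for k
    unfolding visits_def choice_bit_eq_1
    by (intro pred_holds_at_rank pred_intros_logic pred_expansion_orbit pred_digit sets_borel_regions)
  then have "(\<lambda>b. omega_of b k) \<in> measurable P_M (count_space {0, 1})" for k
    unfolding omega_of_def by (intro measurable_If measurable_const predE) auto
  then show ?thesis
    unfolding Omega_M_def
    by (intro measurable_PiM_single') (auto simp: space_PiM PiE_UNIV_domain omega_of_def)
qed

lemma measurable_upsilon_of: "upsilon_of \<in> measurable P_M Ups_M"
proof -
  have "Measurable.pred P_M (\<lambda>b. holds_at_rank (visits (C012 \<beta>) b) (\<lambda>n. b n = c) k)" for c k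
    unfolding visits_def
    by (intro pred_holds_at_rank pred_expansion_orbit pred_digit sets_borel_regions)
  then have "(\<lambda>b. upsilon_of b k) \<in> measurable P_M (count_space {0, 1, 2})" for k
    unfolding upsilon_of_def by (intro measurable_If measurable_const predE) auto
  then show ?thesis
    unfolding Ups_M_def
    by (intro measurable_PiM_single') (auto simp: space_PiM PiE_UNIV_domain upsilon_of_def)
qed

lemma measurable_point_of: "point_of \<in> measurable P_M (X_M \<beta>)"
proof -
  have "expansion \<in> measurable P_M (restrict_space borel (S_beta \<beta>))"
    by (rule measurable_restrict_space2) (auto simp: expansion_in_S_beta borel_measurable_expansion)
  then show ?thesis
    unfolding X_M_def point_of_def[abs_def]
    by (intro measurable_Pair measurable_omega_of measurable_upsilon_of)
qed

lemma measurable_K: "K \<beta> \<in> measurable (X_M \<beta>) (X_M \<beta>)"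
proof -
  define step where "step p = (\<beta> * fst (snd (snd p)) - fst (qv (dig \<beta> p)),
    \<beta> * snd (snd (snd p)) - snd (qv (dig \<beta> p)))" for p
  have K_eq: "K \<beta> = (\<lambda>p. (if snd (snd p) \<in> Cset \<beta> then sshift (fst p) else fst p,
      if snd (snd p) \<in> C012 \<beta> then sshift (fst (snd p)) else fst (snd p), step p))"
  proof
    fix p :: point
    show "K \<beta> p = (if snd (snd p) \<in> Cset \<beta> then sshift (fst p) else fst p,
      if snd (snd p) \<in> C012 \<beta> then sshift (fst (snd p)) else fst (snd p), step p)"
      by (cases p) (simp add: K_apply step_def)
  qed
  have "step \<in> borel_measurable (X_M \<beta>)"
  proof -
    have "(\<lambda>p. f (dig \<beta> p)) \<in> borel_measurable (X_M \<beta>)" for f :: "nat \<Rightarrow> real"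
      using measurable_compose[OF measurable_dig, of f borel] by simp
    then show ?thesis
      unfolding step_def[abs_def] using borel_measurable_position by measurable
  qed
  then have "step \<in> measurable (X_M \<beta>) (restrict_space borel (S_beta \<beta>))"
    using K_in_space position_K
    by (intro measurable_restrict_space2) (auto simp: space_X_M step_def)
  moreover have "(\<lambda>p. if snd (snd p) \<in> Cset \<beta> then sshift (fst p) else fst p) \<in> measurable (X_M \<beta>) Omega_M"
    "(\<lambda>p. if snd (snd p) \<in> C012 \<beta> then sshift (fst (snd p)) else fst (snd p)) \<in> measurable (X_M \<beta>) Ups_M"
    unfolding Omega_M_def Ups_M_def
    by (intro measurable_If predE[OF pred_position] sets_borel_regions
        measurable_compose[OF _ measurable_sshift] measurable_fst_X_M[unfolded Omega_M_def]
        measurable_fst_snd_X_M[unfolded Ups_M_def])+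
  ultimately show ?thesis
    unfolding K_eq by (subst (2) X_M_def) (intro measurable_Pair)
qed

lemma measurable_funpow_K: "(K \<beta> ^^ n) \<in> measurable (X_M \<beta>) (X_M \<beta>)"
  by (induction n) (auto intro: measurable_compose[OF _ measurable_K])

lemma measurable_phi: "phi \<beta> \<in> measurable (X_M \<beta>) P_M"
proof -
  have "(\<lambda>p. dig \<beta> ((K \<beta> ^^ n) p)) \<in> measurable (X_M \<beta>) (count_space {0, 1, 2})" for n
    using dig_in_digits[OF funpow_K_in_space] measurable_compose[OF measurable_funpow_K measurable_dig]
    by (auto simp: measurable_count_space_eq2 measurable_sets)
  then have digits: "(\<lambda>p. dig \<beta> ((K \<beta> ^^ n) p)) \<in> measurable (X_M \<beta>) (uniform_count_measure {0, 1, 2})" for n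
    by (simp add: measurable_cong_sets[OF refl sets_uniform_count_measure_count_space])
  show ?thesis
    unfolding P_M_def phi_def[abs_def]
  proof (rule measurable_PiM_single')
    show "(\<lambda>p n. dig \<beta> ((K \<beta> ^^ n) p)) \<in> space (X_M \<beta>) \<rightarrow> (\<Pi>\<^sub>E n\<in>UNIV. space (uniform_count_measure {0, 1, 2}))"
      using phi_in_space by (auto simp: phi_def space_P_M space_uniform_count_measure PiE_UNIV_domain)
  qed (rule digits)
qed

lemma sets_Z: "Z \<beta> \<in> sets (X_M \<beta>)"
proof -
  have pred: "Measurable.pred (X_M \<beta>) (\<lambda>p. \<forall>m. \<exists>n. m < n \<and> snd (snd ((K \<beta> ^^ n) p)) \<in> R)"
    if "R \<in> sets borel" for R
    using pred_sets2[OF that measurable_compose[OF measurable_funpow_K borel_measurable_position]]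
    by (intro pred_intros_countable pred_intros_logic(3) measurable_const) auto
  have eq: "Z \<beta> = {p \<in> space (X_M \<beta>). \<forall>m. \<exists>n. m < n \<and> snd (snd ((K \<beta> ^^ n) p)) \<in> Cset \<beta>}
      \<inter> {p \<in> space (X_M \<beta>). \<forall>m. \<exists>n. m < n \<and> snd (snd ((K \<beta> ^^ n) p)) \<in> C012 \<beta>}"
    unfolding Z_def infinite_nat_iff_unbounded by auto
  show ?thesis
    unfolding eq by (intro sets.Int predE pred sets_borel_regions)
qed

lemma sets_good_seqs: "good_seqs \<in> sets P_M"
proof -
  have pred: "Measurable.pred P_M (\<lambda>b. \<forall>m. \<exists>n. m < n \<and> expansion ((sshift ^^ n) b) \<in> R)"
    if "R \<in> sets borel" for R
    using pred_expansion_orbit[OF that]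
    by (intro pred_intros_countable pred_intros_logic(3) measurable_const) auto
  have eq: "good_seqs = {b \<in> space P_M. \<forall>m. \<exists>n. m < n \<and> expansion ((sshift ^^ n) b) \<in> Cset \<beta>}
      \<inter> {b \<in> space P_M. \<forall>m. \<exists>n. m < n \<and> expansion ((sshift ^^ n) b) \<in> C012 \<beta>}"
    unfolding good_seqs_def visits_def infinite_nat_iff_unbounded by auto
  show ?thesis
    unfolding eq by (intro sets.Int predE pred sets_borel_regions)
qed

section \<open>The isomorphism\<close>

abbreviation coded_measure :: "point measure" where
  "coded_measure \<equiv> distr P_M (X_M \<beta>) point_of"

lemma emeasure_coded_measure:
  "A \<in> sets (X_M \<beta>) \<Longrightarrow> emeasure coded_measure A = emeasure P_M (point_of -` A \<inter> space P_M)"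
  by (rule emeasure_distr[OF measurable_point_of])

lemma AE_good_seqs_emeasure_eq:
  assumes "A \<in> sets P_M"
  shows "emeasure P_M (good_seqs \<inter> A) = emeasure P_M A"
  by (rule emeasure_eq_AE) (use AE_good_seqs assms sets_good_seqs in auto)

lemma phi_image_eq:
  "phi \<beta> ` (Z \<beta> \<inter> A) = good_seqs \<inter> (point_of -` A \<inter> space P_M)"
  unfolding phi_image_Z_Int by (auto simp: good_seqs_def)

lemma sets_phi_image: "A \<in> sets (X_M \<beta>) \<Longrightarrow> phi \<beta> ` (Z \<beta> \<inter> A) \<in> sets P_M"
  unfolding phi_image_eq using sets_good_seqs measurable_sets[OF measurable_point_of] by auto

lemma nu_fun_eq: "A \<in> sets (X_M \<beta>) \<Longrightarrow> nu_fun \<beta> A = emeasure coded_measure A"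
  unfolding nu_fun_def phi_image_eq emeasure_coded_measure
  using measurable_sets[OF measurable_point_of] by (simp add: AE_good_seqs_emeasure_eq)

lemma measure_space_nu_fun: "measure_space (space (X_M \<beta>)) (sets (X_M \<beta>)) (nu_fun \<beta>)"
proof -
  have "measure_space (space (X_M \<beta>)) (sets (X_M \<beta>)) (emeasure coded_measure)"
    using measure_space[of coded_measure] by (simp add: sets.sigma_sets_eq)
  then show ?thesis
    using measure_space_eq[OF sets.space_closed, of "X_M \<beta>" "nu_fun \<beta>" "emeasure coded_measure"]
    by (simp add: nu_fun_eq sets.sigma_sets_eq)
qed

lemma nu_eq: "nu \<beta> = coded_measure"
proof -
  have "nu \<beta> = measure_of (space (X_M \<beta>)) (sets (X_M \<beta>)) (emeasure coded_measure)"
    unfolding nu_def by (rule measure_of_eq[OF sets.space_closed]) (simp add: nu_fun_eq sets.sigma_sets_eq)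
  also have "\<dots> = coded_measure"
    using measure_of_of_measure[of coded_measure] by simp
  finally show ?thesis .
qed

lemma mpreserving_K: "mpreserving coded_measure (K \<beta>)"
  unfolding mpreserving_def
proof (intro conjI ballI)
  show "K \<beta> \<in> measurable coded_measure coded_measure"
    using measurable_K by simp
  fix A assume "A \<in> sets coded_measure"
  then have A: "A \<in> sets (X_M \<beta>)" by simp
  have "b \<in> point_of -` (K \<beta> -` A \<inter> space (X_M \<beta>)) \<inter> space P_M
      \<longleftrightarrow> b \<in> sshift -` (point_of -` A \<inter> space P_M) \<inter> space P_M" for b
    by (cases "b \<in> space P_M") (simp_all add: K_point_of point_of_in_space sshift_in_space_P_M)
  then have "point_of -` (K \<beta> -` A \<inter> space (X_M \<beta>)) \<inter> space P_M
      = sshift -` (point_of -` A \<inter> space P_M) \<inter> space P_M"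
    by blast
  then show "emeasure coded_measure (K \<beta> -` A \<inter> space coded_measure) = emeasure coded_measure A"
    using emeasure_coded_measure[OF measurable_sets[OF measurable_K A]] emeasure_coded_measure[OF A]
      emeasure_sshift_vimage_P_M[OF measurable_sets[OF measurable_point_of A]]
    by simp
qed

lemma emeasure_not_Z: "emeasure coded_measure (space coded_measure - Z \<beta>) = 0"
proof -
  have sets: "space (X_M \<beta>) - Z \<beta> \<in> sets (X_M \<beta>)"
    using sets_Z by auto
  have "AE b in P_M. point_of b \<in> Z \<beta>"
    using AE_good_seqs by eventually_elim (rule point_of_in_Z)
  moreover have "{b \<in> space P_M. point_of b \<notin> Z \<beta>} = point_of -` (space (X_M \<beta>) - Z \<beta>) \<inter> space P_M"
    using point_of_in_space by auto
  ultimately have "emeasure P_M (point_of -` (space (X_M \<beta>) - Z \<beta>) \<inter> space P_M) = 0"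
    using AE_iff_measurable[OF measurable_sets[OF measurable_point_of sets]] by simp
  then show ?thesis
    by (simp add: emeasure_coded_measure[OF sets])
qed

lemma emeasure_not_good_seqs: "emeasure P_M (space P_M - good_seqs) = 0"
  using AE_iff_measurable[of "space P_M - good_seqs" P_M "\<lambda>b. b \<in> good_seqs"] AE_good_seqs sets_good_seqs
  by blast

lemma emeasure_phi_vimage:
  assumes A: "A \<in> sets P_M"
  shows "emeasure coded_measure (phi \<beta> -` A \<inter> Z \<beta>) = emeasure P_M A"
proof -
  have "phi \<beta> -` A \<inter> Z \<beta> = (phi \<beta> -` A \<inter> space (X_M \<beta>)) \<inter> Z \<beta>"
    by (auto simp: Z_def)
  then have sets: "phi \<beta> -` A \<inter> Z \<beta> \<in> sets (X_M \<beta>)"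
    using measurable_sets[OF measurable_phi A] sets_Z by auto
  have "AE b in P_M. b \<in> point_of -` (phi \<beta> -` A \<inter> Z \<beta>) \<inter> space P_M \<longleftrightarrow> b \<in> A"
    using AE_good_seqs AE_space
    by eventually_elim (auto simp: point_of_in_Z good_seqs_def phi_point_of)
  then have "emeasure P_M (point_of -` (phi \<beta> -` A \<inter> Z \<beta>) \<inter> space P_M) = emeasure P_M A"
    by (rule emeasure_eq_AE) (use measurable_sets[OF measurable_point_of sets] A in auto)
  then show ?thesis
    by (simp add: emeasure_coded_measure[OF sets])
qed

lemma mps_isomorphic_K_sshift: "mps_isomorphic (nu \<beta>) (K \<beta>) P_M sshift"
  unfolding mps_isomorphic_def nu_eq
proof (intro conjI mpreserving_K mpreserving_sshift exI[of _ "Z \<beta>"] exI[of _ good_seqs] exI[of _ "phi \<beta>"])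
  show "Z \<beta> \<in> sets coded_measure" by (simp add: sets_Z)
  show "K \<beta> ` Z \<beta> \<subseteq> Z \<beta>" using K_Z by auto
  show "sshift ` good_seqs \<subseteq> good_seqs" using sshift_good_seqs by auto
  show "phi \<beta> \<in> measurable (restrict_space coded_measure (Z \<beta>)) (restrict_space P_M good_seqs)"
    using measurable_phi phi_in_good_seqs
    by (intro measurable_restrict_space3) (auto cong: measurable_cong_sets)
  show "the_inv_into (Z \<beta>) (phi \<beta>) \<in> measurable (restrict_space P_M good_seqs) (restrict_space coded_measure (Z \<beta>))"
  proof (subst measurable_cong)
    show "the_inv_into (Z \<beta>) (phi \<beta>) b = point_of b" if "b \<in> space (restrict_space P_M good_seqs)" for b
      using that by (simp add: space_restrict_space the_inv_into_phi good_seqs_def)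
    show "point_of \<in> measurable (restrict_space P_M good_seqs) (restrict_space coded_measure (Z \<beta>))"
      using measurable_point_of point_of_in_Z
      by (intro measurable_restrict_space3) (auto cong: measurable_cong_sets)
  qed
  show "\<forall>A\<in>sets P_M. emeasure coded_measure (phi \<beta> -` A \<inter> Z \<beta>) = emeasure P_M A"
    using emeasure_phi_vimage by blast
qed (use sets_good_seqs emeasure_not_Z emeasure_not_good_seqs bij_betw_phi phi_K in auto)

end

theorem theorem4p6:
  fixes \<beta> :: real
  assumes "1 < \<beta>" and "\<beta> \<le> beta_star"
  shows "(\<forall>A \<in> sets (X_M \<beta>). phi \<beta> ` (Z \<beta> \<inter> A) \<in> sets P_M) \<and>
         measure_space (space (X_M \<beta>)) (sets (X_M \<beta>)) (nu_fun \<beta>) \<and>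
         mps_isomorphic (nu \<beta>) (K \<beta>) P_M sshift"
proof -
  interpret small_beta \<beta>
    using assms by unfold_locales
  show ?thesis
    using sets_phi_image measure_space_nu_fun mps_isomorphic_K_sshift by blast
qed

end
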